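(* Let $p_{\boldsymbol\phi}$ be a smooth, decomposable, normalized PC (i.e. $\sum_{c\in\mathrm{ch}(n)}\theta_{n,c}=1$ for every sum node $n$), let $\mathcal D$ be a finite dataset with $p_{\boldsymbol\phi}(\mathbf x)>0$ for all $\mathbf x\in\mathcal D$, and let $\gamma>1$, $\alpha:=1/(\gamma-1)$. Then, among all normalized $\boldsymbol\phi'\in\mathbb R^E$ (i.e. $\sum_{c\in\mathrm{ch}(n)}\exp(\phi'_{n,c})=1$ for all sum nodes $n$), the objective $$\frac{1}{|\mathcal D|}\sum_{\mathbf x\in\mathcal D}\Big(\log p_{\boldsymbol\phi}(\mathbf x)+\Big\langle\frac{\partial\log p_{\boldsymbol\phi}(\mathbf x)}{\partial\boldsymbol\phi},\boldsymbol\phi'-\boldsymbol\phi\Big\rangle\Big)-\gamma\,\mathrm{KL}_{\boldsymbol\phi}(\boldsymbol\phi')$$ (equivalently $Q^{\mathcal D}_{\boldsymbol\phi}(\boldsymbol\phi')-(\gamma-1)\mathrm{KL}_{\boldsymbol\phi}(\boldsymbol\phi')$) has a unique maximizer, given for every sum edge $(n,c)$ by $$\theta'_{n,c}=\exp(\phi'_{n,c})=\frac{\mathrm{TD}(n)\,\theta_{n,c}+\alpha\,\mathrm F^{\mathcal D}_{\boldsymbol\phi}(n,c)}{\sum_{c'\in\mathrm{ch}(n)}\big(\mathrm{TD}(n)\,\theta_{n,c'}+\alpha\,\mathrm F^{\mathcal D}_{\boldsymbol\phi}(n,c')\big)}.$$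
   Context: Probabilistic circuits. Let $\mathbf X$ be a finite set of discrete random variables, each with a finite domain; $\mathbf x$ denotes a full assignment to $\mathbf X$. A probabilistic circuit (PC) is a finite directed acyclic graph with a unique root node $n_r$ (the only node without parents), each node of which is an input node (no children), a product node, or a sum node. $\mathrm{ch}(n)$ and $\mathrm{pa}(n)$ denote the children and parents of $n$. Every child of a sum node is a product node or an input node, and every child of a product node is a sum node or an input node. Each input node $n$ carries a fixed (parameter-free) probability distribution $f_n$ over a single variable of $\mathbf X$. Each edge $(n,c)$ with $n$ a sum node carries a real log-parameter $\phi_{n,c}$; write $\theta_{n,c}=\exp(\phi_{n,c})>0$ and $\boldsymbol\phi=(\phi_{n,c})\in\mathbb R^E$, where $E$ is the set of such edges. The scope of a node is the set of variables of its descendant input nodes. The PC is smooth if all children of each sum node have the same scope, and decomposable if the children of each product node have pairwise disjoint scopes; all PCs are assumed smooth and decomposable. Unnormalized node values are defined recursively: $\tilde p^n_{\boldsymbol\phi}(\mathbf x)=f_n(\mathbf x)$ for an input node, $\prod_{c\in\mathrm{ch}(n)}\tilde p^c_{\boldsymbol\phi}(\mathbf x)$ for a product node, $\sum_{c\in\mathrm{ch}(n)}\theta_{n,c}\tilde p^c_{\boldsymbol\phi}(\mathbf x)$ for a sum node; $\tilde p_{\boldsymbol\phi}:=\tilde p^{n_r}_{\boldsymbol\phi}$. Partition functions $Z_n(\boldsymbol\phi)$ are defined by the same recursion but with $Z_n(\boldsymbol\phi)=1$ at input nodes; $Z(\boldsymbol\phi):=Z_{n_r}(\boldsymbol\phi)$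 and $p_{\boldsymbol\phi}(\mathbf x):=\tilde p_{\boldsymbol\phi}(\mathbf x)/Z(\boldsymbol\phi)$. Derivatives with respect to $\boldsymbol\phi$ treat all $\phi_{n,c}$ as independent real variables. Latent-variable view. An induced tree $T$ is a subgraph containing $n_r$ such that for every sum node in $T$ exactly one of its children (with the connecting edge) is in $T$, for every product node in $T$ all its children (and edges) are in $T$, and every node of $T$ is reached from $n_r$ in this way. Let $\mathcal T$ be the set of induced trees. Define $\tilde p_{\boldsymbol\phi}(\mathbf x,T)=\prod_{(n,c)\in T,\ n\text{ sum}}\theta_{n,c}\cdot\prod_{n\in T\text{ input}}f_n(\mathbf x)$ and $p_{\boldsymbol\phi}(\mathbf x,T)=\tilde p_{\boldsymbol\phi}(\mathbf x,T)/Z(\boldsymbol\phi)$; this is a joint distribution with marginal $p_{\boldsymbol\phi}(\mathbf X)$. Let $p_{\boldsymbol\phi}(T\mid\mathbf x)=p_{\boldsymbol\phi}(\mathbf x,T)/p_{\boldsymbol\phi}(\mathbf x)$. Define $\mathrm{KL}_{\boldsymbol\phi}(\boldsymbol\phi'):=\sum_{\mathbf x,T}p_{\boldsymbol\phi}(\mathbf x,T)\log\frac{p_{\boldsymbol\phi}(\mathbf x,T)}{p_{\boldsymbol\phi'}(\mathbf x,T)}$. For a finite dataset (multiset) $\mathcal D$, $Q^{\mathcal D}_{\boldsymbol\phi}(\boldsymbol\phi'):=\frac1{|\mathcal D|}\sum_{\mathbf x\in\mathcal D}\sum_{T\in\mathcal T}p_{\boldsymbol\phi}(T\mid\mathbf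 x)\log p_{\boldsymbol\phi'}(\mathbf x,T)$. Top-down probabilities: $\mathrm{TD}(n_r)=1$; for a sum node $n\ne n_r$, $\mathrm{TD}(n)=\sum_{m\in\mathrm{pa}(n)}\mathrm{TD}(m)$; for a product node $n\neq n_r$, $\mathrm{TD}(n)=\sum_{m\in\mathrm{pa}(n)}\theta_{m,n}\mathrm{TD}(m)$. Flows: $\mathrm F^{\mathcal D}_{\boldsymbol\phi}(n,c):=\frac1{|\mathcal D|}\sum_{\mathbf x\in\mathcal D}\frac{\partial\log\tilde p_{\boldsymbol\phi}(\mathbf x)}{\partial\phi_{n,c}}$. *)

theory Defs
  imports "HOL-Analysis.Analysis" "HOL-Library.Multiset" "HOL-Library.FuncSet"
begin

datatype nkind = InputN | ProdN | SumN

text \<open>A circuit over node type 'n, variable type 'v and value type 'd.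
  ivar n / ifun n are the variable and the (fixed) distribution of an input node.\<close>
record ('n, 'v, 'd) pc =
  nodes :: "'n set"
  root :: 'n
  kind :: "'n \<Rightarrow> nkind"
  ch :: "'n \<Rightarrow> 'n set"
  ivar :: "'n \<Rightarrow> 'v"
  ifun :: "'n \<Rightarrow> 'd \<Rightarrow> real"

definition dag_rel :: "('n, 'v, 'd) pc \<Rightarrow> ('n \<times> 'n) set" where
  "dag_rel C = {(n, c). n \<in> nodes C \<and> c \<in> ch C n}"

definition parents :: "('n, 'v, 'd) pc \<Rightarrow> 'n \<Rightarrow> 'n set" where
  "parents C n = {m \<in> nodes C. n \<in> ch C m}"

definition scope :: "('n, 'v, 'd) pc \<Rightarrow> 'n \<Rightarrow> 'v set" where
  "scope C n = {ivar C m | m. (n, m) \<in> (dag_rel C)\<^sup>* \<and> kind C m = InputN}"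

definition wf_pc :: "'v set \<Rightarrow> ('v \<Rightarrow> 'd set) \<Rightarrow> ('n, 'v, 'd) pc \<Rightarrow> bool" where
  "wf_pc Vars Dom C \<longleftrightarrow>
     finite Vars \<and> (\<forall>v\<in>Vars. finite (Dom v)) \<and>
     finite (nodes C) \<and> root C \<in> nodes C \<and>
     (\<forall>n\<in>nodes C. ch C n \<subseteq> nodes C) \<and>
     acyclic (dag_rel C) \<and>
     (\<forall>n\<in>nodes C. parents C n = {} \<longleftrightarrow> n = root C) \<and>
     (\<forall>n\<in>nodes C. kind C n = InputN \<longleftrightarrow> ch C n = {}) \<and>
     (\<forall>n\<in>nodes C. kind C n = SumN \<longrightarrow> (\<forall>c\<in>ch C n. kind C c \<noteq> SumN)) \<and>
     (\<forall>n\<in>nodes C. kind C n = ProdN \<longrightarrow> (\<forall>c\<in>ch C n. kind C c \<noteq> ProdN)) \<and>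
     (\<forall>n\<in>nodes C. kind C n = InputN \<longrightarrow>
        ivar C n \<in> Vars \<and> (\<forall>d\<in>Dom (ivar C n). 0 \<le> ifun C n d) \<and>
        (\<Sum>d\<in>Dom (ivar C n). ifun C n d) = 1) \<and>
     scope C (root C) = Vars"

definition smooth :: "('n, 'v, 'd) pc \<Rightarrow> bool" where
  "smooth C \<longleftrightarrow> (\<forall>n\<in>nodes C. kind C n = SumN \<longrightarrow>
      (\<forall>c\<in>ch C n. \<forall>c'\<in>ch C n. scope C c = scope C c'))"

definition decomposable :: "('n, 'v, 'd) pc \<Rightarrow> bool" where
  "decomposable C \<longleftrightarrow> (\<forall>n\<in>nodes C. kind C n = ProdN \<longrightarrow>
      (\<forall>c\<in>ch C n. \<forall>c'\<in>ch C n. c \<noteq> c' \<longrightarrow> scope C c \<inter> scope C c' = {}))"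

text \<open>The sum edges E; parameters phi are functions on edges, only their values on E matter.\<close>
definition sum_edges :: "('n, 'v, 'd) pc \<Rightarrow> ('n \<times> 'n) set" where
  "sum_edges C = {(n, c). n \<in> nodes C \<and> kind C n = SumN \<and> c \<in> ch C n}"

definition normalized :: "('n, 'v, 'd) pc \<Rightarrow> ('n \<times> 'n \<Rightarrow> real) \<Rightarrow> bool" where
  "normalized C \<phi> \<longleftrightarrow> (\<forall>n\<in>nodes C. kind C n = SumN \<longrightarrow> (\<Sum>c\<in>ch C n. exp (\<phi> (n, c))) = 1)"

definition eval_rec :: "'n set \<Rightarrow> ('n \<Rightarrow> ('n \<Rightarrow> real) \<Rightarrow> real) \<Rightarrow> 'n \<Rightarrow> real" where
  "eval_rec N F = (THE g. (\<forall>n\<in>N. g n = F n g) \<and> (\<forall>n. n \<notin> N \<longrightarrow> g n = 0))"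

definition ptilde_node :: "('n, 'v, 'd) pc \<Rightarrow> ('n \<times> 'n \<Rightarrow> real) \<Rightarrow> ('v \<Rightarrow> 'd) \<Rightarrow> 'n \<Rightarrow> real" where
  "ptilde_node C \<phi> x = eval_rec (nodes C) (\<lambda>n g. case kind C n of
      InputN \<Rightarrow> ifun C n (x (ivar C n))
    | ProdN \<Rightarrow> (\<Prod>c\<in>ch C n. g c)
    | SumN \<Rightarrow> (\<Sum>c\<in>ch C n. exp (\<phi> (n, c)) * g c))"

definition ptilde :: "('n, 'v, 'd) pc \<Rightarrow> ('n \<times> 'n \<Rightarrow> real) \<Rightarrow> ('v \<Rightarrow> 'd) \<Rightarrow> real" where
  "ptilde C \<phi> x = ptilde_node C \<phi> x (root C)"

definition Z_node :: "('n, 'v, 'd) pc \<Rightarrow> ('n \<times> 'n \<Rightarrow> real) \<Rightarrow> 'n \<Rightarrow> real" where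
  "Z_node C \<phi> = eval_rec (nodes C) (\<lambda>n g. case kind C n of
      InputN \<Rightarrow> 1
    | ProdN \<Rightarrow> (\<Prod>c\<in>ch C n. g c)
    | SumN \<Rightarrow> (\<Sum>c\<in>ch C n. exp (\<phi> (n, c)) * g c))"

definition Zpc :: "('n, 'v, 'd) pc \<Rightarrow> ('n \<times> 'n \<Rightarrow> real) \<Rightarrow> real" where
  "Zpc C \<phi> = Z_node C \<phi> (root C)"

definition pc_prob :: "('n, 'v, 'd) pc \<Rightarrow> ('n \<times> 'n \<Rightarrow> real) \<Rightarrow> ('v \<Rightarrow> 'd) \<Rightarrow> real" where
  "pc_prob C \<phi> x = ptilde C \<phi> x / Zpc C \<phi>"

definition induced_trees :: "('n, 'v, 'd) pc \<Rightarrow> ('n set \<times> ('n \<times> 'n) set) set" where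
  "induced_trees C = {(TN, TE). TN \<subseteq> nodes C \<and> TE \<subseteq> dag_rel C \<and> root C \<in> TN \<and>
      (\<forall>(n, c)\<in>TE. n \<in> TN \<and> c \<in> TN) \<and>
      (\<forall>n\<in>TN. kind C n = SumN \<longrightarrow> (\<exists>!c. (n, c) \<in> TE)) \<and>
      (\<forall>n\<in>TN. kind C n = ProdN \<longrightarrow> (\<forall>c\<in>ch C n. (n, c) \<in> TE)) \<and>
      (\<forall>m\<in>TN. (root C, m) \<in> TE\<^sup>*)}"

definition joint_tilde :: "('n, 'v, 'd) pc \<Rightarrow> ('n \<times> 'n \<Rightarrow> real) \<Rightarrow> ('v \<Rightarrow> 'd)
    \<Rightarrow> 'n set \<times> ('n \<times> 'n) set \<Rightarrow> real" where
  "joint_tilde C \<phi> x T =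
     (\<Prod>e\<in>{e \<in> snd T. kind C (fst e) = SumN}. exp (\<phi> e)) *
     (\<Prod>n\<in>{n \<in> fst T. kind C n = InputN}. ifun C n (x (ivar C n)))"

definition joint :: "('n, 'v, 'd) pc \<Rightarrow> ('n \<times> 'n \<Rightarrow> real) \<Rightarrow> ('v \<Rightarrow> 'd)
    \<Rightarrow> 'n set \<times> ('n \<times> 'n) set \<Rightarrow> real" where
  "joint C \<phi> x T = joint_tilde C \<phi> x T / Zpc C \<phi>"

definition KL :: "'v set \<Rightarrow> ('v \<Rightarrow> 'd set) \<Rightarrow> ('n, 'v, 'd) pc
    \<Rightarrow> ('n \<times> 'n \<Rightarrow> real) \<Rightarrow> ('n \<times> 'n \<Rightarrow> real) \<Rightarrow> real" where
  "KL Vars Dom C \<phi> \<phi>' = (\<Sum>x\<in>PiE Vars Dom. \<Sum>T\<in>induced_trees C.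
      joint C \<phi> x T * ln (joint C \<phi> x T / joint C \<phi>' x T))"

text \<open>TD for input nodes is not used (set to 0).\<close>
definition TD :: "('n, 'v, 'd) pc \<Rightarrow> ('n \<times> 'n \<Rightarrow> real) \<Rightarrow> 'n \<Rightarrow> real" where
  "TD C \<phi> = eval_rec (nodes C) (\<lambda>n g. if n = root C then 1 else (case kind C n of
      SumN \<Rightarrow> (\<Sum>m\<in>parents C n. g m)
    | ProdN \<Rightarrow> (\<Sum>m\<in>parents C n. exp (\<phi> (m, n)) * g m)
    | InputN \<Rightarrow> 0))"

text \<open>Partial derivative with respect to the coordinate e, all coordinates independent.\<close>
definition pderiv_at :: "(('e \<Rightarrow> real) \<Rightarrow> real) \<Rightarrow> ('e \<Rightarrow> real) \<Rightarrow> 'e \<Rightarrow> real" where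
  "pderiv_at f \<phi> e = deriv (\<lambda>t. f (\<phi>(e := t))) (\<phi> e)"

definition flow :: "('n, 'v, 'd) pc \<Rightarrow> ('v \<Rightarrow> 'd) multiset \<Rightarrow> ('n \<times> 'n \<Rightarrow> real) \<Rightarrow> 'n \<times> 'n \<Rightarrow> real" where
  "flow C D \<phi> e = (1 / real (size D)) * (\<Sum>x\<in>#D. pderiv_at (\<lambda>\<psi>. ln (ptilde C \<psi> x)) \<phi> e)"

definition objective :: "'v set \<Rightarrow> ('v \<Rightarrow> 'd set) \<Rightarrow> ('n, 'v, 'd) pc \<Rightarrow> ('v \<Rightarrow> 'd) multiset
    \<Rightarrow> real \<Rightarrow> ('n \<times> 'n \<Rightarrow> real) \<Rightarrow> ('n \<times> 'n \<Rightarrow> real) \<Rightarrow> real" where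
  "objective Vars Dom C D \<gamma> \<phi> \<phi>' =
     (1 / real (size D)) * (\<Sum>x\<in>#D. ln (pc_prob C \<phi> x) +
        (\<Sum>e\<in>sum_edges C. pderiv_at (\<lambda>\<psi>. ln (pc_prob C \<psi> x)) \<phi> e * (\<phi>' e - \<phi> e)))
     - \<gamma> * KL Vars Dom C \<phi> \<phi>'"

end

theory Submission
  imports Defs "HOL-Library.Disjoint_Sets"
begin

text \<open>For normalized parameters \<open>Z = 1\<close>, so the log-likelihood gradient and the complete-data
  KL divergence are both affine in the new log-parameters \<open>\<phi>'\<close>. Induced trees decompose
  bijectively at sum nodes and, by decomposability, at product nodes, so every node value is the
  total weight of the induced trees below it; by smoothness, each induced tree also reads every
  variable exactly once. Hence the expected number of uses of a sum edge \<open>(n, c)\<close> by the latent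
  tree is \<open>\<partial>Z/\<partial>\<phi>(n, c)\<close>, which reverse-mode accumulation over the DAG identifies with
  \<open>TD(n) \<theta>(n, c)\<close>. The objective is therefore a constant plus \<open>(\<gamma> - 1) \<Sum>\<^sub>e v(e) \<phi>'(e)\<close> with
  \<open>v = TD \<theta> + \<alpha> F > 0\<close>, and Gibbs' inequality on each simplex \<open>\<Sum>\<^sub>c exp \<phi>'(n, c) = 1\<close> gives
  the unique maximizer \<open>exp \<phi>'(n, c) = v(n, c) / \<Sum>\<^sub>c\<^sub>' v(n, c')\<close>.\<close>

section \<open>Circuit values\<close>

lemma eval_rec_unfold:
  assumes wf: "wf R"
    and local: "\<And>n g g'. n \<in> N \<Longrightarrow> (\<And>m. (m, n) \<in> R \<Longrightarrow> g m = g' m) \<Longrightarrow> F n g = F n g'"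
    and "n \<in> N"
  shows "eval_rec N F n = F n (eval_rec N F)"
proof -
  let ?P = "\<lambda>g. (\<forall>n\<in>N. g n = F n g) \<and> (\<forall>n. n \<notin> N \<longrightarrow> g n = 0)"
  define G where "G = (\<lambda>g n. if n \<in> N then F n g else (0::real))"
  have "adm_wf R G"
  proof (unfold adm_wf_def, intro allI impI)
    fix f g :: "_ \<Rightarrow> real" and m
    assume "\<forall>k. (k, m) \<in> R \<longrightarrow> f k = g k"
    then show "G f m = G g m"
      unfolding G_def using local[of m f g] by simp
  qed
  then have "\<And>m. wfrec R G m = G (wfrec R G) m"
    using wfrec_fixpoint[OF wf] by metis
  then have ex: "?P (wfrec R G)"
    unfolding G_def by simp
  have uniq: "g1 = g2" if "?P g1" "?P g2" for g1 g2
  proof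
    fix m show "g1 m = g2 m"
      using wf
    proof (induction m rule: wf_induct_rule)
      case (less m)
      then show ?case
        using that local[of m g1 g2] by (cases "m \<in> N") auto
    qed
  qed
  have "?P (eval_rec N F)"
    unfolding eval_rec_def by (rule theI[of ?P, OF ex uniq[OF _ ex]])
  then show ?thesis
    using \<open>n \<in> N\<close> by blast
qed

definition circuit_value :: "('n, 'v, 'd) pc \<Rightarrow> ('n \<times> 'n \<Rightarrow> real) \<Rightarrow> ('n \<Rightarrow> real) \<Rightarrow> 'n \<Rightarrow> real" where
  "circuit_value C \<psi> h = eval_rec (nodes C) (\<lambda>n g. case kind C n of
      InputN \<Rightarrow> h n
    | ProdN \<Rightarrow> (\<Prod>c\<in>ch C n. g c)
    | SumN \<Rightarrow> (\<Sum>c\<in>ch C n. exp (\<psi> (n, c)) * g c))"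

definition input_value :: "('n, 'v, 'd) pc \<Rightarrow> ('v \<Rightarrow> 'd) \<Rightarrow> 'n \<Rightarrow> real" where
  "input_value C x n = ifun C n (x (ivar C n))"

lemma ptilde_node_eq_circuit_value: "ptilde_node C \<psi> x = circuit_value C \<psi> (input_value C x)"
  unfolding ptilde_node_def circuit_value_def input_value_def by simp

lemma Z_node_eq_circuit_value: "Z_node C \<psi> = circuit_value C \<psi> (\<lambda>_. 1)"
  unfolding Z_node_def circuit_value_def by simp

definition descendants :: "('n, 'v, 'd) pc \<Rightarrow> 'n \<Rightarrow> 'n set" where
  "descendants C c = {m. (c, m) \<in> (dag_rel C)\<^sup>*}"

locale smooth_decomposable_pc =
  fixes Vars :: "'v set" and Dom :: "'v \<Rightarrow> 'd set" and C :: "('n, 'v, 'd) pc"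
  assumes wf_pc: "wf_pc Vars Dom C" and smooth: "smooth C" and decomposable: "decomposable C"
begin

lemma finite_nodes: "finite (nodes C)"
  and root_in_nodes: "root C \<in> nodes C"
  and children_in_nodes: "n \<in> nodes C \<Longrightarrow> ch C n \<subseteq> nodes C"
  and acyclic_dag_rel: "acyclic (dag_rel C)"
  and parents_empty_iff: "n \<in> nodes C \<Longrightarrow> parents C n = {} \<longleftrightarrow> n = root C"
  and input_iff_no_children: "n \<in> nodes C \<Longrightarrow> kind C n = InputN \<longleftrightarrow> ch C n = {}"
  and sum_child_not_sum: "n \<in> nodes C \<Longrightarrow> kind C n = SumN \<Longrightarrow> c \<in> ch C n \<Longrightarrow> kind C c \<noteq> SumN"
  and prod_child_not_prod: "n \<in> nodes C \<Longrightarrow> kind C n = ProdN \<Longrightarrow> c \<in> ch C n \<Longrightarrow> kind C c \<noteq> ProdN"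
  and input_var: "n \<in> nodes C \<Longrightarrow> kind C n = InputN \<Longrightarrow> ivar C n \<in> Vars"
  and input_nonneg: "n \<in> nodes C \<Longrightarrow> kind C n = InputN \<Longrightarrow> d \<in> Dom (ivar C n) \<Longrightarrow> 0 \<le> ifun C n d"
  and input_sum: "n \<in> nodes C \<Longrightarrow> kind C n = InputN \<Longrightarrow> (\<Sum>d\<in>Dom (ivar C n). ifun C n d) = 1"
  and scope_root: "scope C (root C) = Vars"
  and finite_Vars: "finite Vars"
  and finite_Dom: "v \<in> Vars \<Longrightarrow> finite (Dom v)"
  using wf_pc by (simp_all add: wf_pc_def)

lemma dag_rel_iff [simp]: "(n, c) \<in> dag_rel C \<longleftrightarrow> n \<in> nodes C \<and> c \<in> ch C n"
  by (simp add: dag_rel_def)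

lemma finite_dag_rel: "finite (dag_rel C)"
proof -
  have "dag_rel C \<subseteq> nodes C \<times> nodes C"
    using children_in_nodes by (auto simp: dag_rel_def)
  then show ?thesis
    using finite_nodes finite_subset by blast
qed

lemma wf_children: "wf ((dag_rel C)\<inverse>)"
  using finite_acyclic_wf_converse[OF finite_dag_rel acyclic_dag_rel] .

lemma wf_parents: "wf (dag_rel C)"
  using finite_acyclic_wf[OF finite_dag_rel acyclic_dag_rel] .

lemma finite_children: "n \<in> nodes C \<Longrightarrow> finite (ch C n)"
  using children_in_nodes finite_nodes finite_subset by blast

lemma finite_parents: "finite (parents C n)"
  using finite_nodes by (simp add: parents_def)

lemma finite_sum_edges: "finite (sum_edges C)"
proof -
  have "sum_edges C \<subseteq> dag_rel C"
    by (auto simp: sum_edges_def)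
  then show ?thesis
    using finite_dag_rel finite_subset by blast
qed

lemma sum_edgesD:
  "e \<in> sum_edges C \<Longrightarrow> fst e \<in> nodes C \<and> kind C (fst e) = SumN \<and> snd e \<in> ch C (fst e)"
  by (auto simp: sum_edges_def)

lemma circuit_value_rec: "n \<in> nodes C \<Longrightarrow> circuit_value C \<psi> h n = (case kind C n of
      InputN \<Rightarrow> h n
    | ProdN \<Rightarrow> (\<Prod>c\<in>ch C n. circuit_value C \<psi> h c)
    | SumN \<Rightarrow> (\<Sum>c\<in>ch C n. exp (\<psi> (n, c)) * circuit_value C \<psi> h c))"
  unfolding circuit_value_def
proof (rule eval_rec_unfold[OF wf_children])
  fix n and g g' :: "'n \<Rightarrow> real"
  assume "n \<in> nodes C" and "\<And>m. (m, n) \<in> (dag_rel C)\<inverse> \<Longrightarrow> g m = g' m"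
  then have "\<And>c. c \<in> ch C n \<Longrightarrow> g c = g' c"
    by simp
  then show "(case kind C n of InputN \<Rightarrow> h n | ProdN \<Rightarrow> \<Prod>c\<in>ch C n. g c
      | SumN \<Rightarrow> \<Sum>c\<in>ch C n. exp (\<psi> (n, c)) * g c) =
    (case kind C n of InputN \<Rightarrow> h n | ProdN \<Rightarrow> \<Prod>c\<in>ch C n. g' c
      | SumN \<Rightarrow> \<Sum>c\<in>ch C n. exp (\<psi> (n, c)) * g' c)"
    by (simp cong: prod.cong sum.cong split: nkind.split)
qed

lemma TD_rec: "n \<in> nodes C \<Longrightarrow> TD C \<phi> n = (if n = root C then 1 else (case kind C n of
      SumN \<Rightarrow> (\<Sum>m\<in>parents C n. TD C \<phi> m)
    | ProdN \<Rightarrow> (\<Sum>m\<in>parents C n. exp (\<phi> (m, n)) * TD C \<phi> m)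
    | InputN \<Rightarrow> 0))"
  unfolding TD_def
proof (rule eval_rec_unfold[OF wf_parents])
  fix n and g g' :: "'n \<Rightarrow> real"
  assume "\<And>m. (m, n) \<in> dag_rel C \<Longrightarrow> g m = g' m"
  then have "\<And>m. m \<in> parents C n \<Longrightarrow> g m = g' m"
    by (simp add: parents_def)
  then show "(if n = root C then 1 else case kind C n of
        SumN \<Rightarrow> \<Sum>m\<in>parents C n. g m | ProdN \<Rightarrow> \<Sum>m\<in>parents C n. exp (\<phi> (m, n)) * g m
      | InputN \<Rightarrow> 0) =
    (if n = root C then 1 else case kind C n of
        SumN \<Rightarrow> \<Sum>m\<in>parents C n. g' m | ProdN \<Rightarrow> \<Sum>m\<in>parents C n. exp (\<phi> (m, n)) * g' m
      | InputN \<Rightarrow> 0)"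
    by (simp cong: sum.cong split: nkind.split)
qed

lemma Z_node_normalized: "normalized C \<psi> \<Longrightarrow> n \<in> nodes C \<Longrightarrow> Z_node C \<psi> n = 1"
proof (induction n rule: wf_induct_rule[OF wf_children])
  case (1 n)
  have "c \<in> ch C n \<Longrightarrow> Z_node C \<psi> c = 1" for c
    using 1 children_in_nodes by auto
  with 1(2,3) show ?case
    unfolding Z_node_eq_circuit_value
    by (auto simp: circuit_value_rec normalized_def split: nkind.split)
qed

lemma Zpc_normalized: "normalized C \<psi> \<Longrightarrow> Zpc C \<psi> = 1"
  unfolding Zpc_def by (rule Z_node_normalized[OF _ root_in_nodes])

lemma TD_pos: "n \<in> nodes C \<Longrightarrow> kind C n \<noteq> InputN \<Longrightarrow> TD C \<phi> n > 0"
proof (induction n rule: wf_induct_rule[OF wf_parents])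
  case (1 n)
  show ?case
  proof (cases "n = root C")
    case True
    then show ?thesis using 1 by (simp add: TD_rec)
  next
    case False
    then have "parents C n \<noteq> {}"
      using parents_empty_iff 1 by blast
    moreover have "TD C \<phi> m > 0" if "m \<in> parents C n" for m
    proof -
      have "m \<in> nodes C" "n \<in> ch C m"
        using that by (auto simp: parents_def)
      then show ?thesis
        using 1 input_iff_no_children by auto
    qed
    ultimately show ?thesis
      using 1(2,3) False finite_parents
      by (auto simp: TD_rec split: nkind.split intro!: sum_pos)
  qed
qed

lemma scope_rec: "n \<in> nodes C \<Longrightarrow>
   scope C n = (if kind C n = InputN then {ivar C n} else (\<Union>c\<in>ch C n. scope C c))"
proof -
  assume n: "n \<in> nodes C"
  have "(n, m) \<in> (dag_rel C)\<^sup>* \<longleftrightarrow> n = m \<or> (\<exists>c. (n, c) \<in> dag_rel C \<and> (c, m) \<in> (dag_rel C)\<^sup>*)" for m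
    by (metis converse_rtranclE converse_rtrancl_into_rtrancl rtrancl.rtrancl_refl)
  then have "scope C n = {ivar C m |m. (n = m \<or> (\<exists>c. (n, c) \<in> dag_rel C \<and> (c, m) \<in> (dag_rel C)\<^sup>*))
       \<and> kind C m = InputN}"
    unfolding scope_def by simp
  also have "\<dots> = (if kind C n = InputN then {ivar C n} else (\<Union>c\<in>ch C n. scope C c))"
    using n input_iff_no_children[OF n] by (auto simp: scope_def)
  finally show ?thesis .
qed

lemma descendant_in_nodes: "(c, m) \<in> (dag_rel C)\<^sup>* \<Longrightarrow> c \<in> nodes C \<Longrightarrow> m \<in> nodes C"
  by (induction rule: rtrancl_induct) (auto intro: children_in_nodes[THEN subsetD])

lemma scope_nonempty: "n \<in> nodes C \<Longrightarrow> scope C n \<noteq> {}"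
proof (induction n rule: wf_induct_rule[OF wf_children])
  case (1 n)
  show ?case
  proof (cases "kind C n = InputN")
    case True
    then show ?thesis using 1 by (simp add: scope_rec)
  next
    case False
    then obtain c where c: "c \<in> ch C n"
      using input_iff_no_children 1 by blast
    then have "scope C c \<noteq> {}"
      using 1 children_in_nodes by auto
    then show ?thesis
      using False c 1 by (auto simp: scope_rec)
  qed
qed

lemma scope_descendant_subset: "(c, m) \<in> (dag_rel C)\<^sup>* \<Longrightarrow> scope C m \<subseteq> scope C c"
proof
  fix v assume cm: "(c, m) \<in> (dag_rel C)\<^sup>*" and "v \<in> scope C m"
  then obtain m' where "v = ivar C m'" "(m, m') \<in> (dag_rel C)\<^sup>*" "kind C m' = InputN"
    unfolding scope_def by blast
  moreover have "(c, m') \<in> (dag_rel C)\<^sup>*"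
    using cm calculation(2) by (rule rtrancl_trans)
  ultimately show "v \<in> scope C c"
    unfolding scope_def by blast
qed

lemma scope_sum_child:
  assumes "n \<in> nodes C" "kind C n = SumN" "c \<in> ch C n"
  shows "scope C n = scope C c"
proof -
  have "\<forall>c'\<in>ch C n. scope C c' = scope C c"
    using smooth assms unfolding smooth_def by blast
  moreover have "scope C n = (\<Union>c'\<in>ch C n. scope C c')"
    using scope_rec[OF assms(1)] assms(2) by simp
  ultimately show ?thesis
    using assms(3) by blast
qed

lemma scope_prod_children_disjoint:
  "n \<in> nodes C \<Longrightarrow> kind C n = ProdN \<Longrightarrow> c \<in> ch C n \<Longrightarrow> c' \<in> ch C n \<Longrightarrow>
   c \<noteq> c' \<Longrightarrow> scope C c \<inter> scope C c' = {}"
  using decomposable unfolding decomposable_def by blast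

text \<open>A node below two children of a product node would put its nonempty scope into both of
  their disjoint scopes.\<close>

lemma prod_children_common_descendant:
  assumes "n \<in> nodes C" "kind C n = ProdN" "c \<in> ch C n" "c' \<in> ch C n"
    and "m \<in> descendants C c" "m \<in> descendants C c'"
  shows "c = c'"
proof (rule ccontr)
  assume "c \<noteq> c'"
  have "c \<in> nodes C"
    using assms(1,3) children_in_nodes by blast
  then have "m \<in> nodes C"
    using assms(5) descendant_in_nodes by (simp add: descendants_def)
  then have "scope C m \<noteq> {}"
    by (rule scope_nonempty)
  moreover have "scope C m \<subseteq> scope C c \<inter> scope C c'"
    using assms(5,6) scope_descendant_subset unfolding descendants_def by blast
  ultimately show False
    using scope_prod_children_disjoint[OF assms(1-4) \<open>c \<noteq> c'\<close>] by blast
qed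

lemma parent_not_descendant: "(r, c) \<in> dag_rel C \<Longrightarrow> r \<notin> descendants C c"
proof
  assume "(r, c) \<in> dag_rel C" "r \<in> descendants C c"
  then have "(r, r) \<in> (dag_rel C)\<^sup>+"
    unfolding descendants_def by (auto intro: rtrancl_into_trancl2)
  then show False
    using acyclic_dag_rel unfolding acyclic_def by blast
qed

end

section \<open>Induced trees\<close>

definition induced_trees_at :: "('n, 'v, 'd) pc \<Rightarrow> 'n \<Rightarrow> ('n set \<times> ('n \<times> 'n) set) set" where
  "induced_trees_at C r = {(TN, TE). TN \<subseteq> nodes C \<and> TE \<subseteq> dag_rel C \<and> r \<in> TN \<and>
      (\<forall>(n, c)\<in>TE. n \<in> TN \<and> c \<in> TN) \<and>
      (\<forall>n\<in>TN. kind C n = SumN \<longrightarrow> (\<exists>!c. (n, c) \<in> TE)) \<and>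
      (\<forall>n\<in>TN. kind C n = ProdN \<longrightarrow> (\<forall>c\<in>ch C n. (n, c) \<in> TE)) \<and>
      (\<forall>m\<in>TN. (r, m) \<in> TE\<^sup>*)}"

lemma induced_trees_eq: "induced_trees C = induced_trees_at C (root C)"
  unfolding induced_trees_def induced_trees_at_def by simp

definition sum_extend :: "'n \<Rightarrow> 'n \<times> ('n set \<times> ('n \<times> 'n) set) \<Rightarrow> 'n set \<times> ('n \<times> 'n) set" where
  "sum_extend r = (\<lambda>(c, T). (insert r (fst T), insert (r, c) (snd T)))"

definition prod_join :: "('n, 'v, 'd) pc \<Rightarrow> 'n \<Rightarrow> ('n \<Rightarrow> 'n set \<times> ('n \<times> 'n) set)
    \<Rightarrow> 'n set \<times> ('n \<times> 'n) set" where
  "prod_join C r \<sigma> = (insert r (\<Union>c\<in>ch C r. fst (\<sigma> c)), Pair r ` ch C r \<union> (\<Union>c\<in>ch C r. snd (\<sigma> c)))"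

definition subtree :: "('n, 'v, 'd) pc \<Rightarrow> 'n \<Rightarrow> 'n set \<times> ('n \<times> 'n) set \<Rightarrow> 'n set \<times> ('n \<times> 'n) set" where
  "subtree C c T = (fst T \<inter> descendants C c, {e \<in> snd T. fst e \<in> descendants C c})"

context smooth_decomposable_pc
begin

lemma induced_trees_atI:
  assumes "TN \<subseteq> nodes C" "TE \<subseteq> dag_rel C" "r \<in> TN"
    "\<And>a b. (a, b) \<in> TE \<Longrightarrow> a \<in> TN \<and> b \<in> TN"
    "\<And>n. n \<in> TN \<Longrightarrow> kind C n = SumN \<Longrightarrow> \<exists>!c. (n, c) \<in> TE"
    "\<And>n c. n \<in> TN \<Longrightarrow> kind C n = ProdN \<Longrightarrow> c \<in> ch C n \<Longrightarrow> (n, c) \<in> TE"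
    "\<And>m. m \<in> TN \<Longrightarrow> (r, m) \<in> TE\<^sup>*"
  shows "(TN, TE) \<in> induced_trees_at C r"
  unfolding induced_trees_at_def mem_Collect_eq case_prod_conv
proof (intro conjI)
  show "\<forall>(a, b)\<in>TE. a \<in> TN \<and> b \<in> TN"
    using assms(4) by blast
  show "\<forall>n\<in>TN. kind C n = SumN \<longrightarrow> (\<exists>!c. (n, c) \<in> TE)"
    using assms(5) by (intro ballI impI)
  show "\<forall>n\<in>TN. kind C n = ProdN \<longrightarrow> (\<forall>c\<in>ch C n. (n, c) \<in> TE)"
    using assms(6) by blast
  show "\<forall>m\<in>TN. (r, m) \<in> TE\<^sup>*"
    using assms(7) by blast
qed (rule assms)+

lemma induced_trees_atD:
  assumes "T \<in> induced_trees_at C r"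
  shows "fst T \<subseteq> nodes C" "snd T \<subseteq> dag_rel C" "r \<in> fst T"
    "\<And>a b. (a, b) \<in> snd T \<Longrightarrow> a \<in> fst T \<and> b \<in> fst T"
    "\<And>n. n \<in> fst T \<Longrightarrow> kind C n = SumN \<Longrightarrow> \<exists>!c. (n, c) \<in> snd T"
    "\<And>n c. n \<in> fst T \<Longrightarrow> kind C n = ProdN \<Longrightarrow> c \<in> ch C n \<Longrightarrow> (n, c) \<in> snd T"
    "\<And>m. m \<in> fst T \<Longrightarrow> (r, m) \<in> (snd T)\<^sup>*"
  using assms by (simp_all add: induced_trees_at_def case_prod_beta) (metis fst_conv snd_conv)

lemma tree_node_descendant: "T \<in> induced_trees_at C r \<Longrightarrow> m \<in> fst T \<Longrightarrow> m \<in> descendants C r"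
  unfolding descendants_def
  using induced_trees_atD(7) rtrancl_mono[OF induced_trees_atD(2)] by blast

lemma finite_induced_trees_at: "finite (induced_trees_at C r)"
proof (rule finite_subset)
  show "induced_trees_at C r \<subseteq> Pow (nodes C) \<times> Pow (dag_rel C)"
    using induced_trees_atD(1,2) by (simp add: subset_iff mem_Times_iff)
  show "finite (Pow (nodes C) \<times> Pow (dag_rel C))"
    using finite_nodes finite_dag_rel by simp
qed

lemma finite_tree_nodes: "T \<in> induced_trees_at C r \<Longrightarrow> finite (fst T)"
  using induced_trees_atD(1) finite_nodes finite_subset by blast

lemma finite_tree_edges: "T \<in> induced_trees_at C r \<Longrightarrow> finite (snd T)"
  using induced_trees_atD(2) finite_dag_rel finite_subset by blast

lemma tree_first_edge:
  assumes T: "T \<in> induced_trees_at C r" and m: "m \<in> fst T" "m \<noteq> r"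
  obtains c where "(r, c) \<in> snd T" "c \<in> ch C r" "(c, m) \<in> (snd T)\<^sup>*" "m \<in> descendants C c"
proof -
  have "(r, m) \<in> (snd T)\<^sup>*"
    using induced_trees_atD(7)[OF T m(1)] .
  then obtain c where c: "(r, c) \<in> snd T" "(c, m) \<in> (snd T)\<^sup>*"
    using m(2) by (metis converse_rtranclE)
  moreover have "c \<in> ch C r"
    using c(1) induced_trees_atD(2)[OF T] by auto
  moreover have "m \<in> descendants C c"
    using c(2) rtrancl_mono[OF induced_trees_atD(2)[OF T]] by (auto simp: descendants_def)
  ultimately show ?thesis
    using that by blast
qed

lemma subtree_path:
  assumes "TE \<subseteq> dag_rel C" and "(c, m) \<in> TE\<^sup>*"
  shows "(c, m) \<in> {e \<in> TE. fst e \<in> descendants C c}\<^sup>*"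
  using assms(2)
proof (induction rule: rtrancl_induct)
  case (step y z)
  have "{e \<in> TE. fst e \<in> descendants C c} \<subseteq> dag_rel C"
    using assms(1) by blast
  then have "(c, y) \<in> (dag_rel C)\<^sup>*"
    using step.IH rtrancl_mono by blast
  then have "(y, z) \<in> {e \<in> TE. fst e \<in> descendants C c}"
    using step.hyps(2) by (simp add: descendants_def)
  then show ?case
    using step.IH by (rule rtrancl_into_rtrancl[rotated])
qed simp

lemma subtree_in_induced_trees_at:
  assumes T: "T \<in> induced_trees_at C r" and rc: "(r, c) \<in> snd T"
    and reach: "\<And>m. m \<in> fst T \<Longrightarrow> m \<in> descendants C c \<Longrightarrow> (c, m) \<in> (snd T)\<^sup>*"
  shows "subtree C c T \<in> induced_trees_at C c"
  unfolding subtree_def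
proof (rule induced_trees_atI)
  note D = induced_trees_atD[OF T]
  show "c \<in> fst T \<inter> descendants C c"
    using D(4)[OF rc] by (simp add: descendants_def)
  show "fst T \<inter> descendants C c \<subseteq> nodes C" "{e \<in> snd T. fst e \<in> descendants C c} \<subseteq> dag_rel C"
    using D(1,2) by blast+
next
  fix a b assume "(a, b) \<in> {e \<in> snd T. fst e \<in> descendants C c}"
  then have ab: "(a, b) \<in> snd T" "a \<in> descendants C c" by simp_all
  have "(a, b) \<in> dag_rel C"
    using induced_trees_atD(2)[OF T] ab(1) by blast
  with ab(2) have "b \<in> descendants C c"
    unfolding descendants_def by (simp add: rtrancl_into_rtrancl)
  then show "a \<in> fst T \<inter> descendants C c \<and> b \<in> fst T \<inter> descendants C c"
    using induced_trees_atD(4)[OF T ab(1)] ab(2) by blast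
next
  fix n assume n: "n \<in> fst T \<inter> descendants C c" "kind C n = SumN"
  then have "\<exists>!d. (n, d) \<in> snd T"
    using induced_trees_atD(5)[OF T] by blast
  then show "\<exists>!d. (n, d) \<in> {e \<in> snd T. fst e \<in> descendants C c}"
    using n(1) by simp
next
  fix n d assume "n \<in> fst T \<inter> descendants C c" "kind C n = ProdN" "d \<in> ch C n"
  then show "(n, d) \<in> {e \<in> snd T. fst e \<in> descendants C c}"
    using induced_trees_atD(6)[OF T] by simp
next
  fix m assume "m \<in> fst T \<inter> descendants C c"
  then show "(c, m) \<in> {e \<in> snd T. fst e \<in> descendants C c}\<^sup>*"
    using reach subtree_path[OF induced_trees_atD(2)[OF T]] by blast
qed

lemma tree_at_child_avoids_parent:
  assumes rc: "(r, c) \<in> dag_rel C" and T: "T \<in> induced_trees_at C c"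
  shows "r \<notin> fst T" "(r, b) \<notin> snd T"
proof -
  show "r \<notin> fst T"
    using tree_node_descendant[OF T] parent_not_descendant[OF rc] by blast
  then show "(r, b) \<notin> snd T"
    using induced_trees_atD(4)[OF T] by blast
qed

lemma induced_trees_at_input:
  assumes r: "r \<in> nodes C" "kind C r = InputN"
  shows "induced_trees_at C r = {({r}, {})}"
proof -
  have no_edge: "(r, b) \<notin> dag_rel C" for b
    using input_iff_no_children r by auto
  have "T = ({r}, {})" if T: "T \<in> induced_trees_at C r" for T
  proof -
    note D = induced_trees_atD[OF T]
    have "fst T = {r}"
    proof (rule ccontr)
      assume "fst T \<noteq> {r}"
      then obtain m where "m \<in> fst T" "m \<noteq> r"
        using D(3) by blast
      then obtain c where "(r, c) \<in> snd T"
        by (rule tree_first_edge[OF T])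
      then show False
        using no_edge D(2) by blast
    qed
    moreover have "snd T = {}"
    proof -
      have "a = r" if "(a, b) \<in> snd T" for a b
        using D(4)[OF that] \<open>fst T = {r}\<close> by blast
      then show ?thesis
        using no_edge D(2) by fast
    qed
    ultimately show ?thesis
      by (simp add: prod_eq_iff)
  qed
  moreover have "({r}, {}) \<in> induced_trees_at C r"
    by (rule induced_trees_atI) (use r in auto)
  ultimately show ?thesis
    by blast
qed

lemma sum_extend_in_induced_trees_at:
  assumes r: "r \<in> nodes C" "kind C r = SumN" and c: "c \<in> ch C r" and T: "T \<in> induced_trees_at C c"
  shows "sum_extend r (c, T) \<in> induced_trees_at C r"
  unfolding sum_extend_def case_prod_conv
proof (rule induced_trees_atI)
  note D = induced_trees_atD[OF T]
  have rc: "(r, c) \<in> dag_rel C"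
    using r c by simp
  note F = tree_at_child_avoids_parent[OF rc T]
  show "insert r (fst T) \<subseteq> nodes C" "insert (r, c) (snd T) \<subseteq> dag_rel C" "r \<in> insert r (fst T)"
    using r D(1,2) rc by auto
  show "\<And>a b. (a, b) \<in> insert (r, c) (snd T) \<Longrightarrow> a \<in> insert r (fst T) \<and> b \<in> insert r (fst T)"
    using D(3,4) by blast
  show "\<exists>!d. (n, d) \<in> insert (r, c) (snd T)" if n: "n \<in> insert r (fst T)" "kind C n = SumN" for n
  proof (cases "n = r")
    case True
    then show ?thesis
      using F(2) by blast
  next
    case False
    then have "\<exists>!d. (n, d) \<in> snd T"
      using n D(5) by blast
    then show ?thesis
      using False by simp
  qed
  show "(n, d) \<in> insert (r, c) (snd T)" if "n \<in> insert r (fst T)" "kind C n = ProdN" "d \<in> ch C n" for n d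
    using that D(6) r(2) by auto
  show "(r, m) \<in> (insert (r, c) (snd T))\<^sup>*" if "m \<in> insert r (fst T)" for m
  proof (cases "m = r")
    case False
    then have "(c, m) \<in> (snd T)\<^sup>*"
      using that D(7) by simp
    then have "(c, m) \<in> (insert (r, c) (snd T))\<^sup>*"
      using rtrancl_mono[OF subset_insertI] by blast
    then show ?thesis
      by (rule converse_rtrancl_into_rtrancl[rotated]) simp
  qed simp
qed

lemma inj_on_sum_extend:
  assumes r: "r \<in> nodes C"
  shows "inj_on (sum_extend r) (Sigma (ch C r) (induced_trees_at C))"
proof (rule inj_onI, clarify)
  fix c1 T1 c2 T2
  assume 1: "c1 \<in> ch C r" "T1 \<in> induced_trees_at C c1"
    and 2: "c2 \<in> ch C r" "T2 \<in> induced_trees_at C c2"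
    and eq: "sum_extend r (c1, T1) = sum_extend r (c2, T2)"
  have "(r, c1) \<in> dag_rel C" "(r, c2) \<in> dag_rel C"
    using 1 2 r by simp_all
  note F1 = tree_at_child_avoids_parent[OF this(1) 1(2)]
    and F2 = tree_at_child_avoids_parent[OF this(2) 2(2)]
  have N: "insert r (fst T1) = insert r (fst T2)"
    and E: "insert (r, c1) (snd T1) = insert (r, c2) (snd T2)"
    using eq by (simp_all add: sum_extend_def)
  have "c1 = c2"
    using E F2(2)[of c1] by auto
  moreover have "fst T1 = fst T2"
    using insert_ident[OF F1(1) F2(1)] N by blast
  moreover have "snd T1 = snd T2"
    using insert_ident[OF F1(2) F2(2)[of c1]] E \<open>c1 = c2\<close> by blast
  ultimately show "c1 = c2 \<and> T1 = T2"
    by (simp add: prod_eq_iff)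
qed

lemma sum_tree_below_child:
  assumes T: "T \<in> induced_trees_at C r" and r: "kind C r = SumN"
    and c: "(r, c) \<in> snd T" and m: "m \<in> fst T" "m \<noteq> r"
  shows "(c, m) \<in> (snd T)\<^sup>*" "m \<in> descendants C c"
proof -
  obtain c' where "(r, c') \<in> snd T" "(c', m) \<in> (snd T)\<^sup>*" "m \<in> descendants C c'"
    by (rule tree_first_edge[OF T m])
  moreover have "c' = c"
    using induced_trees_atD(5)[OF T induced_trees_atD(3)[OF T] r] c calculation(1) by blast
  ultimately show "(c, m) \<in> (snd T)\<^sup>*" "m \<in> descendants C c"
    by simp_all
qed

lemma sum_extend_subtree:
  assumes T: "T \<in> induced_trees_at C r" and r: "kind C r = SumN" and c: "(r, c) \<in> snd T"
  shows "subtree C c T \<in> induced_trees_at C c" and "T = sum_extend r (c, subtree C c T)"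
proof -
  note D = induced_trees_atD[OF T]
  note below = sum_tree_below_child[OF T r c]
  have rc: "(r, c) \<in> dag_rel C"
    using D(2) c by blast
  show "subtree C c T \<in> induced_trees_at C c"
  proof (rule subtree_in_induced_trees_at[OF T c])
    fix m assume "m \<in> fst T" "m \<in> descendants C c"
    moreover have "m \<noteq> r"
      using parent_not_descendant[OF rc] calculation(2) by blast
    ultimately show "(c, m) \<in> (snd T)\<^sup>*"
      using below(1) by blast
  qed
  have "insert r (fst T \<inter> descendants C c) = fst T"
    using D(3) below(2) by blast
  moreover have "insert (r, c) {e \<in> snd T. fst e \<in> descendants C c} = snd T"
  proof (intro equalityI subsetI)
    fix e assume e: "e \<in> snd T"
    show "e \<in> insert (r, c) {e \<in> snd T. fst e \<in> descendants C c}"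
    proof (cases "fst e = r")
      case True
      then show ?thesis
        using D(5)[OF D(3) r] c e by (cases e) auto
    next
      case False
      then show ?thesis
        using D(4)[of "fst e" "snd e"] e below(2) by auto
    qed
  qed (use c in blast)
  ultimately show "T = sum_extend r (c, subtree C c T)"
    unfolding sum_extend_def subtree_def by (simp add: prod_eq_iff)
qed

lemma bij_betw_sum_extend:
  assumes r: "r \<in> nodes C" "kind C r = SumN"
  shows "bij_betw (sum_extend r) (Sigma (ch C r) (induced_trees_at C)) (induced_trees_at C r)"
proof (rule bij_betw_imageI[OF inj_on_sum_extend[OF r(1)]])
  show "sum_extend r ` Sigma (ch C r) (induced_trees_at C) = induced_trees_at C r"
  proof
    show "sum_extend r ` Sigma (ch C r) (induced_trees_at C) \<subseteq> induced_trees_at C r"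
      using sum_extend_in_induced_trees_at[OF r] by blast
  next
    show "induced_trees_at C r \<subseteq> sum_extend r ` Sigma (ch C r) (induced_trees_at C)"
    proof
      fix T assume T: "T \<in> induced_trees_at C r"
      then obtain c where c: "(r, c) \<in> snd T"
        using induced_trees_atD(3,5)[OF T] r(2) by blast
      then have "c \<in> ch C r"
        using induced_trees_atD(2)[OF T] by auto
      then show "T \<in> sum_extend r ` Sigma (ch C r) (induced_trees_at C)"
        using sum_extend_subtree[OF T r(2) c] by blast
    qed
  qed
qed

lemma prod_child_trees_separate:
  assumes r: "r \<in> nodes C" "kind C r = ProdN" and \<sigma>: "\<sigma> \<in> PiE (ch C r) (induced_trees_at C)"
    and c: "c \<in> ch C r" "c' \<in> ch C r" and m: "m \<in> fst (\<sigma> c)" "m \<in> descendants C c'"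
  shows "c = c'"
proof -
  have "\<sigma> c \<in> induced_trees_at C c"
    using \<sigma> c(1) by (simp add: PiE_iff)
  then have "m \<in> descendants C c"
    using tree_node_descendant m(1) by blast
  then show ?thesis
    using prod_children_common_descendant[OF r c] m(2) by blast
qed

lemma prod_join_edges_from_child_tree:
  assumes r: "r \<in> nodes C" "kind C r = ProdN" and \<sigma>: "\<sigma> \<in> PiE (ch C r) (induced_trees_at C)"
    and c: "c \<in> ch C r" and n: "n \<in> fst (\<sigma> c)"
  shows "(n, d) \<in> snd (prod_join C r \<sigma>) \<longleftrightarrow> (n, d) \<in> snd (\<sigma> c)"
proof
  have T: "\<And>c. c \<in> ch C r \<Longrightarrow> \<sigma> c \<in> induced_trees_at C c"
    using \<sigma> by (simp add: PiE_iff)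
  have "n \<noteq> r"
    using tree_at_child_avoids_parent(1)[OF _ T[OF c]] r(1) c n by auto
  moreover assume "(n, d) \<in> snd (prod_join C r \<sigma>)"
  ultimately obtain c' where c': "c' \<in> ch C r" "(n, d) \<in> snd (\<sigma> c')"
    by (auto simp: prod_join_def)
  moreover have "c' = c"
    using prod_child_trees_separate[OF r \<sigma> c'(1) c] induced_trees_atD(4)[OF T[OF c'(1)] c'(2)]
      tree_node_descendant[OF T[OF c] n] by blast
  ultimately show "(n, d) \<in> snd (\<sigma> c)"
    by simp
qed (use c in \<open>auto simp: prod_join_def\<close>)

lemma prod_join_in_induced_trees_at:
  assumes r: "r \<in> nodes C" "kind C r = ProdN" and \<sigma>: "\<sigma> \<in> PiE (ch C r) (induced_trees_at C)"
  shows "prod_join C r \<sigma> \<in> induced_trees_at C r"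
proof -
  let ?K = "ch C r"
  have T: "\<And>c. c \<in> ?K \<Longrightarrow> \<sigma> c \<in> induced_trees_at C c"
    using \<sigma> by (simp add: PiE_iff)
  note D = induced_trees_atD[OF T]
  note edges_from = prod_join_edges_from_child_tree[OF r \<sigma>]
  show ?thesis
    unfolding prod_join_def
  proof (rule induced_trees_atI)
    show "insert r (\<Union>c\<in>?K. fst (\<sigma> c)) \<subseteq> nodes C" "r \<in> insert r (\<Union>c\<in>?K. fst (\<sigma> c))"
      "Pair r ` ?K \<union> (\<Union>c\<in>?K. snd (\<sigma> c)) \<subseteq> dag_rel C"
      using r D(1,2) by auto
    show "\<And>a b. (a, b) \<in> Pair r ` ?K \<union> (\<Union>c\<in>?K. snd (\<sigma> c)) \<Longrightarrow>
        a \<in> insert r (\<Union>c\<in>?K. fst (\<sigma> c)) \<and> b \<in> insert r (\<Union>c\<in>?K. fst (\<sigma> c))"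
      using D(3,4) by blast
  next
    fix n assume n: "n \<in> insert r (\<Union>c\<in>?K. fst (\<sigma> c))" "kind C n = SumN"
    then have "n \<noteq> r"
      using r(2) by auto
    then obtain c where c: "c \<in> ?K" "n \<in> fst (\<sigma> c)"
      using n(1) by blast
    have iff: "(n, d) \<in> Pair r ` ?K \<union> (\<Union>c\<in>?K. snd (\<sigma> c)) \<longleftrightarrow> (n, d) \<in> snd (\<sigma> c)" for d
      using edges_from[OF c, of d] unfolding prod_join_def snd_conv .
    obtain d where "(n, d) \<in> snd (\<sigma> c)" "\<forall>d'. (n, d') \<in> snd (\<sigma> c) \<longrightarrow> d' = d"
      using D(5)[OF c n(2)] by (elim ex1E) blast
    then show "\<exists>!d. (n, d) \<in> Pair r ` ?K \<union> (\<Union>c\<in>?K. snd (\<sigma> c))"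
      unfolding iff by blast
  next
    fix n d assume n: "n \<in> insert r (\<Union>c\<in>?K. fst (\<sigma> c))" "kind C n = ProdN" "d \<in> ch C n"
    show "(n, d) \<in> Pair r ` ?K \<union> (\<Union>c\<in>?K. snd (\<sigma> c))"
    proof (cases "n = r")
      case False
      then obtain c where c: "c \<in> ?K" "n \<in> fst (\<sigma> c)"
        using n(1) by blast
      then show ?thesis
        using D(6)[OF c n(2,3)] by blast
    qed (use n(3) in blast)
  next
    fix m assume m: "m \<in> insert r (\<Union>c\<in>?K. fst (\<sigma> c))"
    show "(r, m) \<in> (Pair r ` ?K \<union> (\<Union>c\<in>?K. snd (\<sigma> c)))\<^sup>*"
    proof (cases "m = r")
      case False
      then obtain c where c: "c \<in> ?K" "m \<in> fst (\<sigma> c)"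
        using m by blast
      have "snd (\<sigma> c) \<subseteq> Pair r ` ?K \<union> (\<Union>c\<in>?K. snd (\<sigma> c))"
        using c(1) by blast
      then have "(c, m) \<in> (Pair r ` ?K \<union> (\<Union>c\<in>?K. snd (\<sigma> c)))\<^sup>*"
        using D(7)[OF c] rtrancl_mono by blast
      moreover have "(r, c) \<in> Pair r ` ?K \<union> (\<Union>c\<in>?K. snd (\<sigma> c))"
        using c(1) by blast
      ultimately show ?thesis
        by (rule converse_rtrancl_into_rtrancl[rotated])
    qed simp
  qed
qed

lemma subtree_prod_join:
  assumes r: "r \<in> nodes C" "kind C r = ProdN" and \<sigma>: "\<sigma> \<in> PiE (ch C r) (induced_trees_at C)"
    and c: "c \<in> ch C r"
  shows "subtree C c (prod_join C r \<sigma>) = \<sigma> c"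
proof -
  let ?K = "ch C r"
  have T: "\<And>c. c \<in> ?K \<Longrightarrow> \<sigma> c \<in> induced_trees_at C c"
    using \<sigma> by (simp add: PiE_iff)
  note separate = prod_child_trees_separate[OF r \<sigma>]
  have below: "fst (\<sigma> c) \<subseteq> descendants C c"
    using tree_node_descendant[OF T[OF c]] by blast
  have r_not_below: "r \<notin> descendants C c"
    using parent_not_descendant r(1) c by simp
  have "insert r (\<Union>c\<in>?K. fst (\<sigma> c)) \<inter> descendants C c = fst (\<sigma> c)"
    using separate[OF _ c] below r_not_below c by blast
  moreover have "{e \<in> Pair r ` ?K \<union> (\<Union>c\<in>?K. snd (\<sigma> c)). fst e \<in> descendants C c} = snd (\<sigma> c)"
  proof
    show "{e \<in> Pair r ` ?K \<union> (\<Union>c\<in>?K. snd (\<sigma> c)). fst e \<in> descendants C c} \<subseteq> snd (\<sigma> c)"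
    proof clarify
      fix a b assume ab: "(a, b) \<in> Pair r ` ?K \<union> (\<Union>c\<in>?K. snd (\<sigma> c))" "fst (a, b) \<in> descendants C c"
      then obtain c' where c': "c' \<in> ?K" "(a, b) \<in> snd (\<sigma> c')"
        using r_not_below by auto
      then have "c' = c"
        using separate[OF c'(1) c] induced_trees_atD(4)[OF T[OF c'(1)]] ab(2) by auto
      then show "(a, b) \<in> snd (\<sigma> c)"
        using c'(2) by simp
    qed
    show "snd (\<sigma> c) \<subseteq> {e \<in> Pair r ` ?K \<union> (\<Union>c\<in>?K. snd (\<sigma> c)). fst e \<in> descendants C c}"
      using induced_trees_atD(4)[OF T[OF c]] below c by fastforce
  qed
  ultimately show ?thesis
    unfolding subtree_def prod_join_def by (simp add: prod_eq_iff)
qed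

lemma subtree_of_prod_tree:
  assumes T: "T \<in> induced_trees_at C r" and r: "r \<in> nodes C" "kind C r = ProdN" and c: "c \<in> ch C r"
  shows "subtree C c T \<in> induced_trees_at C c"
proof (rule subtree_in_induced_trees_at[OF T])
  show "(r, c) \<in> snd T"
    using induced_trees_atD(3,6)[OF T] r(2) c by blast
  fix m assume m: "m \<in> fst T" "m \<in> descendants C c"
  then have "m \<noteq> r"
    using parent_not_descendant r(1) c by auto
  then obtain c' where c': "c' \<in> ch C r" "(c', m) \<in> (snd T)\<^sup>*" "m \<in> descendants C c'"
    using tree_first_edge[OF T m(1)] by blast
  moreover have "c' = c"
    using prod_children_common_descendant[OF r c'(1) c c'(3) m(2)] .
  ultimately show "(c, m) \<in> (snd T)\<^sup>*"
    by simp
qed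

lemma prod_join_subtrees:
  assumes T: "T \<in> induced_trees_at C r" and r: "kind C r = ProdN"
  shows "T = prod_join C r (\<lambda>c. subtree C c T)"
proof -
  note D = induced_trees_atD[OF T]
  have below_child: "\<exists>c\<in>ch C r. m \<in> descendants C c" if "m \<in> fst T" "m \<noteq> r" for m
    using tree_first_edge[OF T that] by blast
  have "insert r (\<Union>c\<in>ch C r. fst T \<inter> descendants C c) = fst T"
    using D(3) below_child by auto
  moreover have "Pair r ` ch C r \<union> (\<Union>c\<in>ch C r. {e \<in> snd T. fst e \<in> descendants C c}) = snd T"
  proof (intro equalityI subsetI)
    fix e assume e: "e \<in> snd T"
    show "e \<in> Pair r ` ch C r \<union> (\<Union>c\<in>ch C r. {e \<in> snd T. fst e \<in> descendants C c})"
    proof (cases "fst e = r")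
      case True
      then show ?thesis
        using D(2) e by (cases e) auto
    next
      case False
      then show ?thesis
        using below_child D(4)[of "fst e" "snd e"] e by auto
    qed
  qed (use D(3,6) r in auto)
  ultimately show ?thesis
    unfolding prod_join_def subtree_def by (simp add: prod_eq_iff)
qed

lemma bij_betw_prod_join:
  assumes r: "r \<in> nodes C" "kind C r = ProdN"
  shows "bij_betw (prod_join C r) (PiE (ch C r) (induced_trees_at C)) (induced_trees_at C r)"
proof (rule bij_betw_imageI)
  show "inj_on (prod_join C r) (PiE (ch C r) (induced_trees_at C))"
  proof (rule inj_onI)
    fix \<sigma>1 \<sigma>2 assume 1: "\<sigma>1 \<in> PiE (ch C r) (induced_trees_at C)" and 2: "\<sigma>2 \<in> PiE (ch C r) (induced_trees_at C)"
      and "prod_join C r \<sigma>1 = prod_join C r \<sigma>2"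
    then show "\<sigma>1 = \<sigma>2"
      using subtree_prod_join[OF r 1] subtree_prod_join[OF r 2] by (metis PiE_ext[OF 1 2])
  qed
  show "prod_join C r ` PiE (ch C r) (induced_trees_at C) = induced_trees_at C r"
  proof
    show "prod_join C r ` PiE (ch C r) (induced_trees_at C) \<subseteq> induced_trees_at C r"
      using prod_join_in_induced_trees_at[OF r] by blast
  next
    show "induced_trees_at C r \<subseteq> prod_join C r ` PiE (ch C r) (induced_trees_at C)"
    proof
      fix T assume T: "T \<in> induced_trees_at C r"
      let ?\<sigma> = "restrict (\<lambda>c. subtree C c T) (ch C r)"
      have "?\<sigma> \<in> PiE (ch C r) (induced_trees_at C)"
        using subtree_of_prod_tree[OF T r] by simp
      moreover have "prod_join C r ?\<sigma> = T"
        using prod_join_subtrees[OF T r(2)] by (simp add: prod_join_def)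
      ultimately show "T \<in> prod_join C r ` PiE (ch C r) (induced_trees_at C)"
        by (metis image_eqI)
    qed
  qed
qed

end

section \<open>Tree weights\<close>

definition tree_sum_edges :: "('n, 'v, 'd) pc \<Rightarrow> 'n set \<times> ('n \<times> 'n) set \<Rightarrow> ('n \<times> 'n) set" where
  "tree_sum_edges C T = {e \<in> snd T. kind C (fst e) = SumN}"

definition tree_inputs :: "('n, 'v, 'd) pc \<Rightarrow> 'n set \<times> ('n \<times> 'n) set \<Rightarrow> 'n set" where
  "tree_inputs C T = {n \<in> fst T. kind C n = InputN}"

definition tree_weight :: "('n, 'v, 'd) pc \<Rightarrow> ('n \<times> 'n \<Rightarrow> real) \<Rightarrow> ('n \<Rightarrow> real)
    \<Rightarrow> 'n set \<times> ('n \<times> 'n) set \<Rightarrow> real" where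
  "tree_weight C \<psi> h T = (\<Prod>e\<in>tree_sum_edges C T. exp (\<psi> e)) * (\<Prod>n\<in>tree_inputs C T. h n)"

lemma joint_tilde_eq_tree_weight: "joint_tilde C \<psi> x T = tree_weight C \<psi> (input_value C x) T"
  unfolding joint_tilde_def tree_weight_def tree_sum_edges_def tree_inputs_def input_value_def ..

context smooth_decomposable_pc
begin

lemma finite_tree_sum_edges: "T \<in> induced_trees_at C r \<Longrightarrow> finite (tree_sum_edges C T)"
  using finite_tree_edges by (simp add: tree_sum_edges_def)

lemma tree_sum_edges_subset: "T \<in> induced_trees_at C r \<Longrightarrow> tree_sum_edges C T \<subseteq> sum_edges C"
  using induced_trees_atD(2) by (fastforce simp: tree_sum_edges_def sum_edges_def)

lemma tree_inputs_sum_extend: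
  "kind C r = SumN \<Longrightarrow> tree_inputs C (sum_extend r (c, T)) = tree_inputs C T"
  by (auto simp: tree_inputs_def sum_extend_def)

lemma tree_inputs_prod_join:
  "kind C r = ProdN \<Longrightarrow> tree_inputs C (prod_join C r \<sigma>) = (\<Union>c\<in>ch C r. tree_inputs C (\<sigma> c))"
  by (auto simp: tree_inputs_def prod_join_def)

lemma tree_weight_sum_extend:
  assumes r: "r \<in> nodes C" "kind C r = SumN" and c: "c \<in> ch C r" and T: "T \<in> induced_trees_at C c"
  shows "tree_weight C \<psi> h (sum_extend r (c, T)) = exp (\<psi> (r, c)) * tree_weight C \<psi> h T"
proof -
  have "(r, c) \<notin> tree_sum_edges C T"
    using tree_at_child_avoids_parent(2)[OF _ T] r c by (simp add: tree_sum_edges_def)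
  moreover have "tree_sum_edges C (sum_extend r (c, T)) = insert (r, c) (tree_sum_edges C T)"
    using r(2) by (auto simp: tree_sum_edges_def sum_extend_def)
  ultimately show ?thesis
    unfolding tree_weight_def tree_inputs_sum_extend[OF r(2)] using finite_tree_sum_edges[OF T] by simp
qed

lemma tree_weight_prod_join:
  assumes r: "r \<in> nodes C" "kind C r = ProdN" and \<sigma>: "\<sigma> \<in> PiE (ch C r) (induced_trees_at C)"
  shows "tree_weight C \<psi> h (prod_join C r \<sigma>) = (\<Prod>c\<in>ch C r. tree_weight C \<psi> h (\<sigma> c))"
proof -
  let ?K = "ch C r"
  have T: "\<And>c. c \<in> ?K \<Longrightarrow> \<sigma> c \<in> induced_trees_at C c"
    using \<sigma> by (simp add: PiE_iff)
  have separate: "fst (\<sigma> i) \<inter> fst (\<sigma> j) = {}" if "i \<in> ?K" "j \<in> ?K" "i \<noteq> j" for i j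
    using prod_child_trees_separate[OF r \<sigma> that(1,2)] tree_node_descendant[OF T[OF that(2)]] that(3)
    by blast
  have "tree_sum_edges C (\<sigma> i) \<inter> tree_sum_edges C (\<sigma> j) = {}" if "i \<in> ?K" "j \<in> ?K" "i \<noteq> j" for i j
    using separate[OF that] induced_trees_atD(4)[OF T[OF that(1)]] induced_trees_atD(4)[OF T[OF that(2)]]
    by (fastforce simp: tree_sum_edges_def)
  moreover have "tree_inputs C (\<sigma> i) \<inter> tree_inputs C (\<sigma> j) = {}" if "i \<in> ?K" "j \<in> ?K" "i \<noteq> j" for i j
    using separate[OF that] by (auto simp: tree_inputs_def)
  moreover have "tree_sum_edges C (prod_join C r \<sigma>) = (\<Union>c\<in>?K. tree_sum_edges C (\<sigma> c))"
    using r(2) by (auto simp: tree_sum_edges_def prod_join_def)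
  moreover have "finite (tree_sum_edges C (\<sigma> c))" "finite (tree_inputs C (\<sigma> c))" if "c \<in> ?K" for c
    using finite_tree_sum_edges finite_tree_nodes T[OF that] by (auto simp: tree_inputs_def)
  ultimately show ?thesis
    unfolding tree_weight_def tree_inputs_prod_join[OF r(2)]
    using finite_children[OF r(1)] by (simp add: prod.UNION_disjoint prod.distrib)
qed

lemma sum_tree_weight_sum_node:
  assumes r: "r \<in> nodes C" "kind C r = SumN"
  shows "(\<Sum>T\<in>induced_trees_at C r. tree_weight C \<psi> h T)
    = (\<Sum>c\<in>ch C r. exp (\<psi> (r, c)) * (\<Sum>T\<in>induced_trees_at C c. tree_weight C \<psi> h T))"
proof -
  have "(\<Sum>T\<in>induced_trees_at C r. tree_weight C \<psi> h T)
      = (\<Sum>p\<in>Sigma (ch C r) (induced_trees_at C). tree_weight C \<psi> h (sum_extend r p))"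
    by (rule sum.reindex_bij_betw[OF bij_betw_sum_extend[OF r], symmetric])
  also have "\<dots> = (\<Sum>(c, T)\<in>Sigma (ch C r) (induced_trees_at C). exp (\<psi> (r, c)) * tree_weight C \<psi> h T)"
    by (rule sum.cong) (auto simp: tree_weight_sum_extend[OF r])
  also have "\<dots> = (\<Sum>c\<in>ch C r. \<Sum>T\<in>induced_trees_at C c. exp (\<psi> (r, c)) * tree_weight C \<psi> h T)"
    by (rule sum.Sigma[OF finite_children[OF r(1)], symmetric]) (simp add: finite_induced_trees_at)
  finally show ?thesis
    by (simp add: sum_distrib_left)
qed

lemma sum_tree_weight_prod_node:
  assumes r: "r \<in> nodes C" "kind C r = ProdN"
  shows "(\<Sum>T\<in>induced_trees_at C r. tree_weight C \<psi> h T)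
    = (\<Prod>c\<in>ch C r. \<Sum>T\<in>induced_trees_at C c. tree_weight C \<psi> h T)"
proof -
  have "(\<Sum>T\<in>induced_trees_at C r. tree_weight C \<psi> h T)
      = (\<Sum>\<sigma>\<in>PiE (ch C r) (induced_trees_at C). tree_weight C \<psi> h (prod_join C r \<sigma>))"
    by (rule sum.reindex_bij_betw[OF bij_betw_prod_join[OF r], symmetric])
  also have "\<dots> = (\<Sum>\<sigma>\<in>PiE (ch C r) (induced_trees_at C). \<Prod>c\<in>ch C r. tree_weight C \<psi> h (\<sigma> c))"
    by (rule sum.cong) (simp_all add: tree_weight_prod_join[OF r])
  also have "\<dots> = (\<Prod>c\<in>ch C r. \<Sum>T\<in>induced_trees_at C c. tree_weight C \<psi> h T)"
    by (rule prod_sum_PiE[OF finite_children[OF r(1)] finite_induced_trees_at, symmetric])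
  finally show ?thesis .
qed

lemma sum_tree_weight_eq_circuit_value:
  "n \<in> nodes C \<Longrightarrow> (\<Sum>T\<in>induced_trees_at C n. tree_weight C \<psi> h T) = circuit_value C \<psi> h n"
proof (induction n rule: wf_induct_rule[OF wf_children])
  case (1 n)
  have IH: "c \<in> ch C n \<Longrightarrow> (\<Sum>T\<in>induced_trees_at C c. tree_weight C \<psi> h T) = circuit_value C \<psi> h c" for c
    using 1 children_in_nodes by auto
  show ?case
  proof (cases "kind C n")
    case InputN
    moreover have "tree_sum_edges C ({n}, {}) = {}" "tree_inputs C ({n}, {}) = {n}"
      using InputN by (auto simp: tree_sum_edges_def tree_inputs_def)
    then have "tree_weight C \<psi> h ({n}, {}) = h n"
      by (simp add: tree_weight_def)
    ultimately show ?thesis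
      using 1(2) by (simp add: induced_trees_at_input circuit_value_rec)
  next
    case SumN
    then show ?thesis
      using 1(2) IH by (simp add: sum_tree_weight_sum_node circuit_value_rec)
  next
    case ProdN
    then show ?thesis
      using 1(2) IH by (simp add: sum_tree_weight_prod_node circuit_value_rec)
  qed
qed

lemma tree_inputs_bij_scope:
  "n \<in> nodes C \<Longrightarrow> T \<in> induced_trees_at C n \<Longrightarrow> bij_betw (ivar C) (tree_inputs C T) (scope C n)"
proof (induction n arbitrary: T rule: wf_induct_rule[OF wf_children])
  case (1 n)
  have IH: "c \<in> ch C n \<Longrightarrow> T' \<in> induced_trees_at C c \<Longrightarrow> bij_betw (ivar C) (tree_inputs C T') (scope C c)"
    for c T'
  proof -
    assume "c \<in> ch C n" "T' \<in> induced_trees_at C c"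
    moreover have "(c, n) \<in> (dag_rel C)\<inverse>" "c \<in> nodes C"
      using calculation(1) 1(2) children_in_nodes by auto
    ultimately show ?thesis
      using 1(1) by blast
  qed
  show ?case
  proof (cases "kind C n")
    case InputN
    then have "T = ({n}, {})" "tree_inputs C ({n}, {}) = {n}"
      using 1(2,3) by (auto simp: induced_trees_at_input tree_inputs_def)
    then show ?thesis
      using 1(2) InputN by (simp add: scope_rec)
  next
    case SumN
    then obtain c T' where cT: "c \<in> ch C n" "T' \<in> induced_trees_at C c" "T = sum_extend n (c, T')"
      using 1(3) bij_betw_imp_surj_on[OF bij_betw_sum_extend[OF 1(2) SumN]] by blast
    have "tree_inputs C T = tree_inputs C T'"
      using cT(3) tree_inputs_sum_extend[OF SumN] by simp
    then show ?thesis
      using IH[OF cT(1,2)] scope_sum_child[OF 1(2) SumN cT(1)] by simp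
  next
    case ProdN
    then obtain \<sigma> where \<sigma>: "\<sigma> \<in> PiE (ch C n) (induced_trees_at C)" "T = prod_join C n \<sigma>"
      using 1(3) bij_betw_imp_surj_on[OF bij_betw_prod_join[OF 1(2) ProdN]] by blast
    have bij: "bij_betw (ivar C) (tree_inputs C (\<sigma> c)) (scope C c)" if "c \<in> ch C n" for c
      using IH[OF that] \<sigma>(1) that by (simp add: PiE_iff)
    have "tree_inputs C T = (\<Union>c\<in>ch C n. tree_inputs C (\<sigma> c))"
      using \<sigma>(2) tree_inputs_prod_join[OF ProdN] by simp
    moreover have "bij_betw (ivar C) (\<Union>c\<in>ch C n. tree_inputs C (\<sigma> c)) (\<Union>c\<in>ch C n. scope C c)"
    proof (rule bij_betw_UNION_disjoint)
      show "\<And>c. c \<in> ch C n \<Longrightarrow> bij_betw (ivar C) (tree_inputs C (\<sigma> c)) (scope C c)"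
        by (rule bij)
      show "disjoint_family_on (scope C) (ch C n)"
        unfolding disjoint_family_on_def using scope_prod_children_disjoint[OF 1(2) ProdN] by blast
    qed
    moreover have "(\<Union>c\<in>ch C n. scope C c) = scope C n"
      using scope_rec[OF 1(2)] ProdN by simp
    ultimately show ?thesis
      by simp
  qed
qed

lemma sum_tree_input_product_eq_1:
  assumes T: "T \<in> induced_trees C"
  shows "(\<Sum>x\<in>PiE Vars Dom. \<Prod>m\<in>tree_inputs C T. input_value C x m) = 1"
proof -
  have bij: "bij_betw (ivar C) (tree_inputs C T) Vars"
    using tree_inputs_bij_scope[OF root_in_nodes] T scope_root by (simp add: induced_trees_eq)
  define g where "g = the_inv_into (tree_inputs C T) (ivar C)"
  have g: "bij_betw g Vars (tree_inputs C T)" "\<And>v. v \<in> Vars \<Longrightarrow> ivar C (g v) = v"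
    using bij bij_betw_the_inv_into f_the_inv_into_f_bij_betw unfolding g_def by fastforce+
  have input: "g v \<in> nodes C" "kind C (g v) = InputN" if "v \<in> Vars" for v
    using bij_betw_apply[OF g(1) that] induced_trees_atD(1)[of T "root C"] T
    by (auto simp: tree_inputs_def induced_trees_eq)
  have "(\<Sum>x\<in>PiE Vars Dom. \<Prod>m\<in>tree_inputs C T. input_value C x m)
      = (\<Sum>x\<in>PiE Vars Dom. \<Prod>v\<in>Vars. ifun C (g v) (x v))"
  proof (rule sum.cong[OF refl])
    fix x
    have "(\<Prod>v\<in>Vars. input_value C x (g v)) = (\<Prod>v\<in>Vars. ifun C (g v) (x v))"
      by (rule prod.cong) (simp_all add: input_value_def g(2))
    then show "(\<Prod>m\<in>tree_inputs C T. input_value C x m) = (\<Prod>v\<in>Vars. ifun C (g v) (x v))"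
      using prod.reindex_bij_betw[OF g(1), of "input_value C x"] by simp
  qed
  also have "\<dots> = (\<Prod>v\<in>Vars. \<Sum>d\<in>Dom v. ifun C (g v) d)"
    by (rule prod_sum_PiE[OF finite_Vars finite_Dom, symmetric])
  also have "\<dots> = 1"
  proof (rule prod.neutral, rule ballI)
    fix v assume "v \<in> Vars"
    then show "(\<Sum>d\<in>Dom v. ifun C (g v) d) = 1"
      using input_sum[OF input[OF \<open>v \<in> Vars\<close>]] g(2) by simp
  qed
  finally show ?thesis .
qed

end

section \<open>Derivatives\<close>

lemma pderiv_at_eqI:
  "((\<lambda>t. f (\<phi>(e := t))) has_real_derivative D) (at (\<phi> e)) \<Longrightarrow> pderiv_at f \<phi> e = D"
  unfolding pderiv_at_def by (rule DERIV_imp_deriv)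

text \<open>The adjoint identity behind backpropagation on a DAG with source \<open>r\<close>. The transposed
  recursion for the adjoints \<open>t\<close> is only needed where \<open>d\<close> does not vanish.\<close>

lemma reverse_accumulation:
  fixes d b t :: "'n \<Rightarrow> 'a :: comm_ring_1" and a :: "'n \<Rightarrow> 'n \<Rightarrow> 'a"
  assumes N: "finite N" "r \<in> N" "\<And>u. u \<in> N \<Longrightarrow> succ u \<subseteq> N" "\<And>u. u \<in> N \<Longrightarrow> r \<notin> succ u"
    and d: "\<And>u. u \<in> N \<Longrightarrow> d u = (\<Sum>c\<in>succ u. a u c * d c) + b u"
    and t_root: "t r = 1"
    and t: "\<And>c. c \<in> N \<Longrightarrow> c \<noteq> r \<Longrightarrow> (\<Sum>u\<in>{u \<in> N. c \<in> succ u}. t u * a u c) * d c = t c * d c"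
  shows "d r = (\<Sum>u\<in>N. t u * b u)"
proof -
  have "(\<Sum>u\<in>N. t u * d u) = (\<Sum>u\<in>N. (\<Sum>c\<in>{c \<in> N. c \<in> succ u}. t u * a u c * d c) + t u * b u)"
  proof (rule sum.cong[OF refl])
    fix u assume u: "u \<in> N"
    then have "{c \<in> N. c \<in> succ u} = succ u"
      using N(3) by blast
    then show "t u * d u = (\<Sum>c\<in>{c \<in> N. c \<in> succ u}. t u * a u c * d c) + t u * b u"
      unfolding d[OF u] by (simp add: distrib_left sum_distrib_left mult.assoc)
  qed
  also have "\<dots> = (\<Sum>u\<in>N. \<Sum>c\<in>{c \<in> N. c \<in> succ u}. t u * a u c * d c) + (\<Sum>u\<in>N. t u * b u)"
    by (rule sum.distrib)
  also have "(\<Sum>u\<in>N. \<Sum>c\<in>{c \<in> N. c \<in> succ u}. t u * a u c * d c)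
      = (\<Sum>c\<in>N. \<Sum>u\<in>{u \<in> N. c \<in> succ u}. t u * a u c * d c)"
    by (rule sum.swap_restrict[OF N(1) N(1)])
  also have "\<dots> = (\<Sum>c\<in>N. (\<Sum>u\<in>{u \<in> N. c \<in> succ u}. t u * a u c) * d c)"
    by (simp add: sum_distrib_right)
  also have "\<dots> = (\<Sum>c\<in>N - {r}. t c * d c)"
  proof -
    have no_parent: "{u \<in> N. r \<in> succ u} = {}"
      using N(4) by blast
    have "(\<Sum>u\<in>{u \<in> N. r \<in> succ u}. t u * a u r) * d r = 0"
      unfolding no_parent by simp
    then have "(\<Sum>c\<in>N. (\<Sum>u\<in>{u \<in> N. c \<in> succ u}. t u * a u c) * d c)
        = (\<Sum>c\<in>N - {r}. (\<Sum>u\<in>{u \<in> N. c \<in> succ u}. t u * a u c) * d c)"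
      using sum.remove[OF N(1,2), of "\<lambda>c. (\<Sum>u\<in>{u \<in> N. c \<in> succ u}. t u * a u c) * d c"] by simp
    also have "\<dots> = (\<Sum>c\<in>N - {r}. t c * d c)"
      using t by (intro sum.cong refl) simp
    finally show ?thesis .
  qed
  finally have "(\<Sum>u\<in>N. t u * d u) = (\<Sum>c\<in>N - {r}. t c * d c) + (\<Sum>u\<in>N. t u * b u)" .
  moreover have "(\<Sum>u\<in>N. t u * d u) = d r + (\<Sum>c\<in>N - {r}. t c * d c)"
    using t_root by (simp add: sum.remove[OF N(1,2)])
  ultimately show ?thesis
    by simp
qed
definition circuit_value_deriv :: "('n, 'v, 'd) pc \<Rightarrow> ('n \<times> 'n \<Rightarrow> real) \<Rightarrow> ('n \<Rightarrow> real)
    \<Rightarrow> 'n \<times> 'n \<Rightarrow> 'n \<Rightarrow> real" where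
  "circuit_value_deriv C \<phi> h e n =
     (\<Sum>T\<in>induced_trees_at C n. if e \<in> tree_sum_edges C T then tree_weight C \<phi> h T else 0)"

context smooth_decomposable_pc
begin

lemma tree_weight_has_derivative:
  assumes fin: "finite (tree_sum_edges C T)"
  shows "((\<lambda>t. tree_weight C (\<phi>(e := t)) h T) has_real_derivative
      (if e \<in> tree_sum_edges C T then tree_weight C \<phi> h T else 0)) (at (\<phi> e))"
proof (cases "e \<in> tree_sum_edges C T")
  case True
  define K where "K = (\<Prod>e'\<in>tree_sum_edges C T - {e}. exp (\<phi> e')) * (\<Prod>n\<in>tree_inputs C T. h n)"
  have weight: "tree_weight C (\<phi>(e := t)) h T = exp t * K" for t
  proof -
    have "(\<Prod>e'\<in>tree_sum_edges C T - {e}. exp ((\<phi>(e := t)) e')) = (\<Prod>e'\<in>tree_sum_edges C T - {e}. exp (\<phi> e'))"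
      by (rule prod.cong) auto
    then show ?thesis
      unfolding tree_weight_def K_def by (simp add: prod.remove[OF fin True] mult.assoc)
  qed
  moreover have "tree_weight C \<phi> h T = exp (\<phi> e) * K"
    using weight[of "\<phi> e"] by simp
  moreover have "((\<lambda>t. exp t * K) has_real_derivative exp (\<phi> e) * K) (at (\<phi> e))"
    by (rule DERIV_cmult_right[OF DERIV_exp])
  ultimately show ?thesis
    using True by simp
next
  case False
  then have "(\<Prod>e'\<in>tree_sum_edges C T. exp ((\<phi>(e := t)) e')) = (\<Prod>e'\<in>tree_sum_edges C T. exp (\<phi> e'))" for t
    by (intro prod.cong) auto
  then have "tree_weight C (\<phi>(e := t)) h T = tree_weight C \<phi> h T" for t
    unfolding tree_weight_def by simp
  then show ?thesis
    using False by simp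
qed

lemma circuit_value_has_derivative:
  "((\<lambda>t. circuit_value C (\<phi>(e := t)) h n) has_real_derivative circuit_value_deriv C \<phi> h e n) (at (\<phi> e))"
  if "n \<in> nodes C"
proof -
  have "((\<lambda>t. \<Sum>T\<in>induced_trees_at C n. tree_weight C (\<phi>(e := t)) h T) has_real_derivative
      circuit_value_deriv C \<phi> h e n) (at (\<phi> e))"
    unfolding circuit_value_deriv_def
    by (rule DERIV_sum) (rule tree_weight_has_derivative[OF finite_tree_sum_edges])
  then show ?thesis
    using sum_tree_weight_eq_circuit_value[OF that] by simp
qed

lemma circuit_value_deriv_nonneg:
  assumes "\<And>m. m \<in> nodes C \<Longrightarrow> kind C m = InputN \<Longrightarrow> h m \<ge> 0"
  shows "circuit_value_deriv C \<phi> h e n \<ge> 0"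
  unfolding circuit_value_deriv_def tree_weight_def
proof (intro sum_nonneg)
  fix T assume T: "T \<in> induced_trees_at C n"
  have "h m \<ge> 0" if "m \<in> tree_inputs C T" for m
    using that assms induced_trees_atD(1)[OF T] by (auto simp: tree_inputs_def)
  then show "0 \<le> (if e \<in> tree_sum_edges C T
      then (\<Prod>e\<in>tree_sum_edges C T. exp (\<phi> e)) * (\<Prod>n\<in>tree_inputs C T. h n) else 0)"
    by (simp add: prod_nonneg)
qed

abbreviation Z_deriv :: "('n \<times> 'n \<Rightarrow> real) \<Rightarrow> 'n \<times> 'n \<Rightarrow> 'n \<Rightarrow> real" where
  "Z_deriv \<phi> \<equiv> circuit_value_deriv C \<phi> (\<lambda>_. 1)"

lemma Z_node_has_derivative:
  "n \<in> nodes C \<Longrightarrow> ((\<lambda>t. Z_node C (\<phi>(e := t)) n) has_real_derivative Z_deriv \<phi> e n) (at (\<phi> e))"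
  unfolding Z_node_eq_circuit_value by (rule circuit_value_has_derivative)

lemma Z_deriv_sum_node:
  assumes norm: "normalized C \<phi>" and m: "m \<in> nodes C" "kind C m = SumN"
  shows "Z_deriv \<phi> e m = (\<Sum>c\<in>ch C m. (if (m, c) = e then exp (\<phi> e) else 0) + exp (\<phi> (m, c)) * Z_deriv \<phi> e c)"
proof -
  define \<theta>' where "\<theta>' c = (if (m, c) = e then exp (\<phi> e) else 0)" for c
  have children: "c \<in> nodes C" "Z_node C \<phi> c = 1" if "c \<in> ch C m" for c
    using children_in_nodes m(1) that Z_node_normalized[OF norm] by auto
  have D: "((\<lambda>t. Z_node C (\<phi>(e := t)) m) has_real_derivative Z_deriv \<phi> e m) (at (\<phi> e))"
    by (rule Z_node_has_derivative[OF m(1)])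
  have \<theta>_deriv: "((\<lambda>t. exp ((\<phi>(e := t)) (m, c))) has_real_derivative \<theta>' c) (at (\<phi> e))" for c
    by (cases "(m, c) = e") (auto simp: \<theta>'_def intro!: derivative_eq_intros)
  have eq: "(\<lambda>t. Z_node C (\<phi>(e := t)) m) =
      (\<lambda>t. \<Sum>c\<in>ch C m. exp ((\<phi>(e := t)) (m, c)) * Z_node C (\<phi>(e := t)) c)"
    using m by (simp add: Z_node_eq_circuit_value circuit_value_rec)
  have "((\<lambda>t. \<Sum>c\<in>ch C m. exp ((\<phi>(e := t)) (m, c)) * Z_node C (\<phi>(e := t)) c) has_real_derivative
      (\<Sum>c\<in>ch C m. \<theta>' c * Z_node C \<phi> c + Z_deriv \<phi> e c * exp (\<phi> (m, c)))) (at (\<phi> e))"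
  proof (rule DERIV_sum)
    fix c assume c: "c \<in> ch C m"
    show "((\<lambda>t. exp ((\<phi>(e := t)) (m, c)) * Z_node C (\<phi>(e := t)) c) has_real_derivative
        \<theta>' c * Z_node C \<phi> c + Z_deriv \<phi> e c * exp (\<phi> (m, c))) (at (\<phi> e))"
      using DERIV_mult[OF \<theta>_deriv[of c] Z_node_has_derivative[where \<phi>=\<phi> and e=e, OF children(1)[OF c]]]
      by simp
  qed
  then have "Z_deriv \<phi> e m = (\<Sum>c\<in>ch C m. \<theta>' c * Z_node C \<phi> c + Z_deriv \<phi> e c * exp (\<phi> (m, c)))"
    by (rule DERIV_unique[OF D[unfolded eq]])
  also have "\<dots> = (\<Sum>c\<in>ch C m. \<theta>' c + exp (\<phi> (m, c)) * Z_deriv \<phi> e c)"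
    using children(2) by (intro sum.cong) simp_all
  finally show ?thesis
    unfolding \<theta>'_def .
qed

lemma Z_deriv_prod_node:
  assumes norm: "normalized C \<phi>" and m: "m \<in> nodes C" "kind C m = ProdN"
  shows "Z_deriv \<phi> e m = (\<Sum>c\<in>ch C m. Z_deriv \<phi> e c)"
proof -
  have children: "c \<in> nodes C" "Z_node C \<phi> c = 1" if "c \<in> ch C m" for c
    using children_in_nodes m(1) that Z_node_normalized[OF norm] by auto
  have D: "((\<lambda>t. Z_node C (\<phi>(e := t)) m) has_real_derivative Z_deriv \<phi> e m) (at (\<phi> e))"
    by (rule Z_node_has_derivative[OF m(1)])
  have eq: "(\<lambda>t. Z_node C (\<phi>(e := t)) m) = (\<lambda>t. \<Prod>c\<in>ch C m. Z_node C (\<phi>(e := t)) c)"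
    using m by (simp add: Z_node_eq_circuit_value circuit_value_rec)
  have "((\<lambda>t. \<Prod>c\<in>ch C m. Z_node C (\<phi>(e := t)) c) has_real_derivative
      (\<Sum>c\<in>ch C m. Z_deriv \<phi> e c * (\<Prod>c'\<in>ch C m - {c}. Z_node C (\<phi>(e := \<phi> e)) c'))) (at (\<phi> e))"
    by (rule has_field_derivative_prod) (rule Z_node_has_derivative[OF children(1)])
  then have "Z_deriv \<phi> e m = (\<Sum>c\<in>ch C m. Z_deriv \<phi> e c * (\<Prod>c'\<in>ch C m - {c}. Z_node C \<phi> c'))"
    by (simp add: DERIV_unique[OF D[unfolded eq]])
  also have "\<dots> = (\<Sum>c\<in>ch C m. Z_deriv \<phi> e c)"
    using children(2) by (intro sum.cong refl) (simp add: prod.neutral)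
  finally show ?thesis .
qed

lemma Z_deriv_rec:
  assumes norm: "normalized C \<phi>" and e: "e \<in> sum_edges C" and m: "m \<in> nodes C"
  shows "Z_deriv \<phi> e m = (\<Sum>c\<in>ch C m. (if kind C m = SumN then exp (\<phi> (m, c)) else 1) * Z_deriv \<phi> e c)
     + (if m = fst e then exp (\<phi> e) else 0)"
proof (cases "kind C m")
  case InputN
  then have "Z_node C (\<phi>(e := t)) m = 1" for t
    using m by (simp add: Z_node_eq_circuit_value circuit_value_rec)
  then have "Z_deriv \<phi> e m = 0"
    using DERIV_unique[OF Z_node_has_derivative[OF m]] by simp
  moreover have "ch C m = {}" "m \<noteq> fst e"
    using input_iff_no_children m InputN sum_edgesD[OF e] by auto
  ultimately show ?thesis
    by simp
next
  case SumN
  have "(\<Sum>c\<in>ch C m. if (m, c) = e then exp (\<phi> e) else 0) = (if m = fst e then exp (\<phi> e) else 0)"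
    using sum_edgesD[OF e] finite_children[OF m] by (cases e) (auto simp: sum.delta split: if_splits)
  then show ?thesis
    using Z_deriv_sum_node[OF norm m SumN] SumN by (simp add: sum.distrib)
next
  case ProdN
  then show ?thesis
    using Z_deriv_prod_node[OF norm m ProdN] sum_edgesD[OF e] by auto
qed

lemma TD_parents_rec:
  assumes c: "c \<in> nodes C" "c \<noteq> root C" "kind C c \<noteq> InputN"
  shows "TD C \<phi> c = (\<Sum>u\<in>parents C c. TD C \<phi> u * (if kind C u = SumN then exp (\<phi> (u, c)) else 1))"
proof (cases "kind C c")
  case SumN
  then have "kind C u \<noteq> SumN" if "u \<in> parents C c" for u
    using that sum_child_not_sum by (auto simp: parents_def)
  then show ?thesis
    using TD_rec[OF c(1)] c(2) SumN by simp
next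
  case ProdN
  then have "kind C u = SumN" if "u \<in> parents C c" for u
    using that prod_child_not_prod input_iff_no_children
    by (auto simp: parents_def) (metis empty_iff nkind.exhaust)
  then show ?thesis
    using TD_rec[OF c(1)] c(2) ProdN by (simp add: mult.commute cong: sum.cong)
qed (use c(3) in simp)

lemma Z_deriv_root:
  assumes norm: "normalized C \<phi>" and e: "e \<in> sum_edges C"
  shows "Z_deriv \<phi> e (root C) = TD C \<phi> (fst e) * exp (\<phi> e)"
proof -
  let ?a = "\<lambda>u c. if kind C u = SumN then exp (\<phi> (u, c)) else 1"
  have "Z_deriv \<phi> e (root C) = (\<Sum>u\<in>nodes C. TD C \<phi> u * (if u = fst e then exp (\<phi> e) else 0))"
  proof (rule reverse_accumulation[where a = ?a])
    show "finite (nodes C)" "root C \<in> nodes C" "\<And>u. u \<in> nodes C \<Longrightarrow> ch C u \<subseteq> nodes C"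
      using finite_nodes root_in_nodes children_in_nodes by blast+
    show "\<And>u. u \<in> nodes C \<Longrightarrow> root C \<notin> ch C u"
      using parents_empty_iff[OF root_in_nodes] by (auto simp: parents_def)
    show "\<And>u. u \<in> nodes C \<Longrightarrow>
        Z_deriv \<phi> e u = (\<Sum>c\<in>ch C u. ?a u c * Z_deriv \<phi> e c) + (if u = fst e then exp (\<phi> e) else 0)"
      by (rule Z_deriv_rec[OF norm e])
    show "TD C \<phi> (root C) = 1"
      using TD_rec[OF root_in_nodes] by simp
  next
    fix c assume c: "c \<in> nodes C" "c \<noteq> root C"
    have "Z_deriv \<phi> e c = 0" if "kind C c = InputN"
      using Z_deriv_rec[OF norm e c(1)] input_iff_no_children[OF c(1)] sum_edgesD[OF e] that by auto
    then show "(\<Sum>u\<in>{u \<in> nodes C. c \<in> ch C u}. TD C \<phi> u * ?a u c) * Z_deriv \<phi> e c = TD C \<phi> c * Z_deriv \<phi> e c"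
      using TD_parents_rec[OF c] unfolding parents_def by (cases "kind C c = InputN") simp_all
  qed
  also have "\<dots> = TD C \<phi> (fst e) * exp (\<phi> e)"
    using sum_edgesD[OF e] finite_nodes by (simp add: if_distrib sum.delta cong: if_cong)
  finally show ?thesis .
qed

end

section \<open>Gradient, flows and KL divergence at normalized parameters\<close>

lemma sum_mset_sum_swap: "(\<Sum>x\<in>#M. \<Sum>e\<in>E. f x e) = (\<Sum>e\<in>E. \<Sum>x\<in>#M. f x e)"
  by (induction M) (simp_all add: sum.distrib)

context smooth_decomposable_pc
begin

abbreviation ptilde_deriv :: "('n \<times> 'n \<Rightarrow> real) \<Rightarrow> ('v \<Rightarrow> 'd) \<Rightarrow> 'n \<times> 'n \<Rightarrow> real" where
  "ptilde_deriv \<phi> x e \<equiv> circuit_value_deriv C \<phi> (input_value C x) e (root C)"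

lemma ptilde_has_derivative:
  "((\<lambda>t. ptilde C (\<phi>(e := t)) x) has_real_derivative ptilde_deriv \<phi> x e) (at (\<phi> e))"
  unfolding ptilde_def ptilde_node_eq_circuit_value by (rule circuit_value_has_derivative[OF root_in_nodes])

lemma Zpc_has_derivative:
  "((\<lambda>t. Zpc C (\<phi>(e := t))) has_real_derivative Z_deriv \<phi> e (root C)) (at (\<phi> e))"
  unfolding Zpc_def by (rule Z_node_has_derivative[OF root_in_nodes])

lemma ptilde_pos: "normalized C \<phi> \<Longrightarrow> pc_prob C \<phi> x > 0 \<Longrightarrow> ptilde C \<phi> x > 0"
  by (simp add: pc_prob_def Zpc_normalized)

lemma pderiv_ln_ptilde:
  assumes "ptilde C \<phi> x > 0"
  shows "pderiv_at (\<lambda>\<psi>. ln (ptilde C \<psi> x)) \<phi> e = ptilde_deriv \<phi> x e / ptilde C \<phi> x"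
proof (rule pderiv_at_eqI)
  have "DERIV ln (ptilde C (\<phi>(e := \<phi> e)) x) :> 1 / ptilde C \<phi> x"
    using assms by (simp add: DERIV_ln_divide)
  from DERIV_chain2[OF this ptilde_has_derivative]
  show "((\<lambda>t. ln (ptilde C (\<phi>(e := t)) x)) has_real_derivative ptilde_deriv \<phi> x e / ptilde C \<phi> x) (at (\<phi> e))"
    by simp
qed

lemma pderiv_ln_pc_prob:
  assumes norm: "normalized C \<phi>" and pos: "ptilde C \<phi> x > 0"
  shows "pderiv_at (\<lambda>\<psi>. ln (pc_prob C \<psi> x)) \<phi> e
    = ptilde_deriv \<phi> x e / ptilde C \<phi> x - Z_deriv \<phi> e (root C)"
proof (rule pderiv_at_eqI)
  let ?P = "ptilde C \<phi> x" and ?dP = "ptilde_deriv \<phi> x e" and ?dZ = "Z_deriv \<phi> e (root C)"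
  have "((\<lambda>t. pc_prob C (\<phi>(e := t)) x) has_real_derivative ?dP - ?P * ?dZ) (at (\<phi> e))"
    using DERIV_divide[OF ptilde_has_derivative[where \<phi>=\<phi> and e=e and x=x]
        Zpc_has_derivative[where \<phi>=\<phi> and e=e]] Zpc_normalized[OF norm]
    unfolding pc_prob_def by simp
  moreover have "DERIV ln (pc_prob C (\<phi>(e := \<phi> e)) x) :> 1 / ?P"
    using pos Zpc_normalized[OF norm] by (simp add: pc_prob_def DERIV_ln_divide)
  moreover have "1 / ?P * (?dP - ?P * ?dZ) = ?dP / ?P - ?dZ"
    using pos by (simp add: field_simps)
  ultimately show "((\<lambda>t. ln (pc_prob C (\<phi>(e := t)) x)) has_real_derivative ?dP / ?P - ?dZ) (at (\<phi> e))"
    using DERIV_chain2 by metis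
qed

lemma flow_eq:
  assumes norm: "normalized C \<phi>" and pos: "\<forall>x\<in>#D. pc_prob C \<phi> x > 0"
  shows "flow C D \<phi> e = (1 / real (size D)) * (\<Sum>x\<in>#D. ptilde_deriv \<phi> x e / ptilde C \<phi> x)"
  unfolding flow_def
  using pderiv_ln_ptilde[OF ptilde_pos[OF norm]] pos by (simp cong: image_mset_cong)

lemma flow_nonneg:
  assumes norm: "normalized C \<phi>" and pos: "\<forall>x\<in>#D. pc_prob C \<phi> x > 0"
    and D: "\<forall>x\<in>#D. x \<in> PiE Vars Dom"
  shows "flow C D \<phi> e \<ge> 0"
proof -
  have "ptilde_deriv \<phi> x e \<ge> 0" if "x \<in> PiE Vars Dom" for x
    using that input_var input_nonneg
    by (intro circuit_value_deriv_nonneg) (auto simp: input_value_def PiE_iff)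
  moreover have "ptilde C \<phi> x > 0" if "x \<in># D" for x
    using that ptilde_pos[OF norm] pos by blast
  ultimately have "ptilde_deriv \<phi> x e / ptilde C \<phi> x \<ge> 0" if "x \<in># D" for x
    using that D by (simp add: divide_nonneg_pos)
  then have "(\<Sum>x\<in>#D. (0::real)) \<le> (\<Sum>x\<in>#D. ptilde_deriv \<phi> x e / ptilde C \<phi> x)"
    by (rule sum_mset_mono)
  then show ?thesis
    unfolding flow_eq[OF norm pos] by simp
qed

lemma mean_pderiv_ln_pc_prob:
  assumes norm: "normalized C \<phi>" and pos: "\<forall>x\<in>#D. pc_prob C \<phi> x > 0" and D: "D \<noteq> {#}"
    and e: "e \<in> sum_edges C"
  shows "(1 / real (size D)) * (\<Sum>x\<in>#D. pderiv_at (\<lambda>\<psi>. ln (pc_prob C \<psi> x)) \<phi> e)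
    = flow C D \<phi> e - TD C \<phi> (fst e) * exp (\<phi> e)"
proof -
  have "(\<Sum>x\<in>#D. pderiv_at (\<lambda>\<psi>. ln (pc_prob C \<psi> x)) \<phi> e)
      = (\<Sum>x\<in>#D. ptilde_deriv \<phi> x e / ptilde C \<phi> x - Z_deriv \<phi> e (root C))"
    using pderiv_ln_pc_prob[OF norm ptilde_pos[OF norm]] pos by (simp cong: image_mset_cong)
  also have "\<dots> = (\<Sum>x\<in>#D. ptilde_deriv \<phi> x e / ptilde C \<phi> x) - real (size D) * Z_deriv \<phi> e (root C)"
    by (induction D) (simp_all add: algebra_simps)
  finally show ?thesis
    using D unfolding flow_eq[OF norm pos] Z_deriv_root[OF norm e]
    by (simp add: field_simps nonempty_has_size)
qed

lemma joint_normalized: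
  assumes "normalized C \<psi>" and "T \<in> induced_trees C"
  shows "joint C \<psi> x T = exp (\<Sum>e\<in>tree_sum_edges C T. \<psi> e) * (\<Prod>n\<in>tree_inputs C T. input_value C x n)"
  using assms finite_tree_sum_edges
  unfolding joint_def joint_tilde_eq_tree_weight tree_weight_def
  by (simp add: Zpc_normalized exp_sum induced_trees_eq)

lemma expected_edge_count:
  assumes norm: "normalized C \<phi>" and e: "e \<in> sum_edges C"
  shows "(\<Sum>x\<in>PiE Vars Dom. \<Sum>T\<in>induced_trees C. if e \<in> tree_sum_edges C T then joint C \<phi> x T else 0)
    = TD C \<phi> (fst e) * exp (\<phi> e)"
proof -
  have "(\<Sum>x\<in>PiE Vars Dom. \<Sum>T\<in>induced_trees C. if e \<in> tree_sum_edges C T then joint C \<phi> x T else 0)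
      = (\<Sum>T\<in>induced_trees C. if e \<in> tree_sum_edges C T
          then exp (\<Sum>e\<in>tree_sum_edges C T. \<phi> e) * (\<Sum>x\<in>PiE Vars Dom. \<Prod>n\<in>tree_inputs C T. input_value C x n)
          else 0)"
  proof (subst sum.swap, intro sum.cong refl)
    fix T assume "T \<in> induced_trees C"
    then show "(\<Sum>x\<in>PiE Vars Dom. if e \<in> tree_sum_edges C T then joint C \<phi> x T else 0)
        = (if e \<in> tree_sum_edges C T
          then exp (\<Sum>e\<in>tree_sum_edges C T. \<phi> e) * (\<Sum>x\<in>PiE Vars Dom. \<Prod>n\<in>tree_inputs C T. input_value C x n)
          else 0)"
      by (simp add: joint_normalized[OF norm] sum_distrib_left)
  qed
  also have "\<dots> = Z_deriv \<phi> e (root C)"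
    unfolding circuit_value_deriv_def induced_trees_eq
    by (intro sum.cong refl)
       (simp add: sum_tree_input_product_eq_1 induced_trees_eq tree_weight_def exp_sum finite_tree_sum_edges)
  finally show ?thesis
    using Z_deriv_root[OF norm e] by simp
qed

lemma KL_normalized:
  assumes norm: "normalized C \<phi>" and norm': "normalized C \<psi>"
  shows "KL Vars Dom C \<phi> \<psi> = (\<Sum>e\<in>sum_edges C. TD C \<phi> (fst e) * exp (\<phi> e) * (\<phi> e - \<psi> e))"
proof -
  have KL_term: "joint C \<phi> x T * ln (joint C \<phi> x T / joint C \<psi> x T)
      = (\<Sum>e\<in>sum_edges C. (if e \<in> tree_sum_edges C T then joint C \<phi> x T else 0) * (\<phi> e - \<psi> e))"
    if T: "T \<in> induced_trees C" for x T
  proof -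
    have "tree_sum_edges C T \<subseteq> sum_edges C"
      using tree_sum_edges_subset T by (simp add: induced_trees_eq)
    then have "(\<Sum>e\<in>sum_edges C. (if e \<in> tree_sum_edges C T then joint C \<phi> x T else 0) * (\<phi> e - \<psi> e))
        = (\<Sum>e\<in>tree_sum_edges C T. joint C \<phi> x T * (\<phi> e - \<psi> e))"
      using finite_sum_edges by (intro sum.mono_neutral_cong_right) auto
    then have "(\<Sum>e\<in>sum_edges C. (if e \<in> tree_sum_edges C T then joint C \<phi> x T else 0) * (\<phi> e - \<psi> e))
        = joint C \<phi> x T * (\<Sum>e\<in>tree_sum_edges C T. \<phi> e - \<psi> e)"
      by (simp add: sum_distrib_left)
    moreover have "ln (joint C \<phi> x T / joint C \<psi> x T) = (\<Sum>e\<in>tree_sum_edges C T. \<phi> e - \<psi> e)"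
      if "joint C \<phi> x T \<noteq> 0"
      using that unfolding joint_normalized[OF norm T] joint_normalized[OF norm' T]
      by (simp add: exp_diff[symmetric] sum_subtractf)
    ultimately show ?thesis
      by (cases "joint C \<phi> x T = 0") simp_all
  qed
  have "KL Vars Dom C \<phi> \<psi> = (\<Sum>x\<in>PiE Vars Dom. \<Sum>T\<in>induced_trees C. \<Sum>e\<in>sum_edges C.
      (if e \<in> tree_sum_edges C T then joint C \<phi> x T else 0) * (\<phi> e - \<psi> e))"
    unfolding KL_def by (intro sum.cong refl KL_term)
  also have "\<dots> = (\<Sum>x\<in>PiE Vars Dom. \<Sum>e\<in>sum_edges C. \<Sum>T\<in>induced_trees C.
      (if e \<in> tree_sum_edges C T then joint C \<phi> x T else 0) * (\<phi> e - \<psi> e))"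
    by (rule sum.cong[OF refl]) (rule sum.swap)
  also have "\<dots> = (\<Sum>e\<in>sum_edges C. \<Sum>x\<in>PiE Vars Dom. \<Sum>T\<in>induced_trees C.
      (if e \<in> tree_sum_edges C T then joint C \<phi> x T else 0) * (\<phi> e - \<psi> e))"
    by (rule sum.swap)
  also have "\<dots> = (\<Sum>e\<in>sum_edges C. (\<Sum>x\<in>PiE Vars Dom. \<Sum>T\<in>induced_trees C.
      if e \<in> tree_sum_edges C T then joint C \<phi> x T else 0) * (\<phi> e - \<psi> e))"
    by (simp add: sum_distrib_right)
  finally show ?thesis
    using expected_edge_count[OF norm] by simp
qed

lemma objective_normalized:
  assumes norm: "normalized C \<phi>" and D: "D \<noteq> {#}" and pos: "\<forall>x\<in>#D. pc_prob C \<phi> x > 0"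
    and norm': "normalized C \<psi>"
  shows "objective Vars Dom C D \<gamma> \<phi> \<psi> = objective Vars Dom C D \<gamma> \<phi> \<phi> +
    (\<Sum>e\<in>sum_edges C. (flow C D \<phi> e + (\<gamma> - 1) * (TD C \<phi> (fst e) * exp (\<phi> e))) * (\<psi> e - \<phi> e))"
proof -
  define G where "G e = (1 / real (size D)) * (\<Sum>x\<in>#D. pderiv_at (\<lambda>\<psi>. ln (pc_prob C \<psi> x)) \<phi> e)" for e
  define A where "A = (1 / real (size D)) * (\<Sum>x\<in>#D. ln (pc_prob C \<phi> x))"
  have obj: "objective Vars Dom C D \<gamma> \<phi> \<psi>'
      = A + (\<Sum>e\<in>sum_edges C. G e * (\<psi>' e - \<phi> e)) - \<gamma> * KL Vars Dom C \<phi> \<psi>'" for \<psi>'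
  proof -
    have "(\<Sum>x\<in>#D. ln (pc_prob C \<phi> x) + (\<Sum>e\<in>sum_edges C. pderiv_at (\<lambda>\<psi>. ln (pc_prob C \<psi> x)) \<phi> e * (\<psi>' e - \<phi> e)))
        = (\<Sum>x\<in>#D. ln (pc_prob C \<phi> x))
          + (\<Sum>e\<in>sum_edges C. (\<Sum>x\<in>#D. pderiv_at (\<lambda>\<psi>. ln (pc_prob C \<psi> x)) \<phi> e) * (\<psi>' e - \<phi> e))"
      by (simp only: sum_mset.distrib sum_mset_sum_swap sum_mset_distrib_right)
    then show ?thesis
      unfolding objective_def A_def G_def by (simp add: distrib_left sum_distrib_left mult.assoc)
  qed
  have G: "G e = flow C D \<phi> e - TD C \<phi> (fst e) * exp (\<phi> e)" if "e \<in> sum_edges C" for e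
    unfolding G_def by (rule mean_pderiv_ln_pc_prob[OF norm pos D that])
  have "(\<Sum>e\<in>sum_edges C. G e * (\<psi> e - \<phi> e))
      - \<gamma> * (\<Sum>e\<in>sum_edges C. TD C \<phi> (fst e) * exp (\<phi> e) * (\<phi> e - \<psi> e))
      = (\<Sum>e\<in>sum_edges C. G e * (\<psi> e - \<phi> e) - \<gamma> * (TD C \<phi> (fst e) * exp (\<phi> e) * (\<phi> e - \<psi> e)))"
    by (simp add: sum_distrib_left sum_subtractf)
  also have "\<dots> = (\<Sum>e\<in>sum_edges C.
      (flow C D \<phi> e + (\<gamma> - 1) * (TD C \<phi> (fst e) * exp (\<phi> e))) * (\<psi> e - \<phi> e))"
    by (rule sum.cong[OF refl]) (simp add: G algebra_simps)
  finally show ?thesis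
    unfolding obj KL_normalized[OF norm norm'] KL_normalized[OF norm norm] by simp
qed

lemma objective_le_iff:
  assumes norm: "normalized C \<phi>" and D: "D \<noteq> {#}" and pos: "\<forall>x\<in>#D. pc_prob C \<phi> x > 0"
    and \<gamma>: "\<gamma> > 1" and "normalized C \<psi>" "normalized C \<psi>'"
  shows "objective Vars Dom C D \<gamma> \<phi> \<psi>' \<le> objective Vars Dom C D \<gamma> \<phi> \<psi> \<longleftrightarrow>
    (\<Sum>e\<in>sum_edges C. (TD C \<phi> (fst e) * exp (\<phi> e) + 1 / (\<gamma> - 1) * flow C D \<phi> e) * \<psi>' e)
    \<le> (\<Sum>e\<in>sum_edges C. (TD C \<phi> (fst e) * exp (\<phi> e) + 1 / (\<gamma> - 1) * flow C D \<phi> e) * \<psi> e)"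
proof -
  define v where "v e = TD C \<phi> (fst e) * exp (\<phi> e) + 1 / (\<gamma> - 1) * flow C D \<phi> e" for e
  have "objective Vars Dom C D \<gamma> \<phi> \<omega> = objective Vars Dom C D \<gamma> \<phi> \<phi>
      + (\<gamma> - 1) * ((\<Sum>e\<in>sum_edges C. v e * \<omega> e) - (\<Sum>e\<in>sum_edges C. v e * \<phi> e))"
    if "normalized C \<omega>" for \<omega>
  proof -
    have "flow C D \<phi> e + (\<gamma> - 1) * (TD C \<phi> (fst e) * exp (\<phi> e)) = (\<gamma> - 1) * v e" for e
      using \<gamma> by (simp add: v_def field_simps)
    then show ?thesis
      unfolding objective_normalized[OF norm D pos that]
      by (simp add: sum_distrib_left right_diff_distrib sum_subtractf mult.assoc)
  qed
  then show ?thesis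
    using assms(5,6) \<gamma> unfolding v_def by simp
qed

end

section \<open>Maximizing a linear function over products of simplices\<close>

lemma gibbs_term:
  fixes v V p :: real
  assumes v: "v > 0" and V: "V > 0"
  shows "v * p \<le> v * ln (v / V) + V * exp p - v"
    and "v * p = v * ln (v / V) + V * exp p - v \<Longrightarrow> exp p = v / V"
proof -
  define y where "y = exp p * V / v"
  have y: "y > 0"
    using v V by (simp add: y_def)
  txt \<open>The gap is \<open>v (y - 1 - ln y) \<ge> 0\<close>, which vanishes only at \<open>y = 1\<close>.\<close>
  have ln_y: "ln y = p - ln (v / V)"
    unfolding y_def using v V by (simp add: ln_div ln_mult)
  have "v * y = V * exp p"
    unfolding y_def using v by simp
  then have gap: "v * ln (v / V) + V * exp p - v - v * p = v * (y - 1 - ln y)"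
    unfolding ln_y by (simp add: algebra_simps)
  moreover have "v * (y - 1 - ln y) \<ge> 0"
    using ln_le_minus_one[OF y] v by simp
  ultimately show "v * p \<le> v * ln (v / V) + V * exp p - v"
    by linarith
  assume "v * p = v * ln (v / V) + V * exp p - v"
  then have "ln y = y - 1"
    using gap v by simp
  then have "y = 1"
    by (rule ln_eq_minus_one[OF y])
  then show "exp p = v / V"
    using v V unfolding y_def by (simp add: field_simps)
qed

lemma gibbs_inequality:
  fixes v p :: "'c \<Rightarrow> real"
  assumes fin: "finite K" and v: "\<And>c. c \<in> K \<Longrightarrow> v c > 0" and norm: "(\<Sum>c\<in>K. exp (p c)) = 1"
  shows "(\<Sum>c\<in>K. v c * p c) \<le> (\<Sum>c\<in>K. v c * ln (v c / (\<Sum>c'\<in>K. v c')))"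
    and "(\<Sum>c\<in>K. v c * p c) = (\<Sum>c\<in>K. v c * ln (v c / (\<Sum>c'\<in>K. v c'))) \<Longrightarrow>
         \<forall>c\<in>K. exp (p c) = v c / (\<Sum>c'\<in>K. v c')"
proof -
  define V where "V = (\<Sum>c'\<in>K. v c')"
  have "K \<noteq> {}"
    using norm by auto
  then have V: "V > 0"
    unfolding V_def using fin v by (intro sum_pos) auto
  define gap where "gap c = v c * ln (v c / V) + V * exp (p c) - v c - v c * p c" for c
  have gap_nonneg: "gap c \<ge> 0" if "c \<in> K" for c
    using gibbs_term(1)[OF v[OF that] V, of "p c"] unfolding gap_def by linarith
  have "(\<Sum>c\<in>K. gap c) = (\<Sum>c\<in>K. v c * ln (v c / V)) + V * (\<Sum>c\<in>K. exp (p c)) - V - (\<Sum>c\<in>K. v c * p c)"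
    unfolding gap_def V_def by (simp add: sum.distrib sum_subtractf sum_distrib_left)
  then have sum_gap: "(\<Sum>c\<in>K. gap c) = (\<Sum>c\<in>K. v c * ln (v c / V)) - (\<Sum>c\<in>K. v c * p c)"
    using norm by simp
  then show "(\<Sum>c\<in>K. v c * p c) \<le> (\<Sum>c\<in>K. v c * ln (v c / (\<Sum>c'\<in>K. v c')))"
    using sum_nonneg[of K gap, OF gap_nonneg] unfolding V_def by linarith
  assume "(\<Sum>c\<in>K. v c * p c) = (\<Sum>c\<in>K. v c * ln (v c / (\<Sum>c'\<in>K. v c')))"
  then have "\<forall>c\<in>K. gap c = 0"
    using sum_gap sum_nonneg_eq_0_iff[of K gap] fin gap_nonneg unfolding V_def by simp
  then show "\<forall>c\<in>K. exp (p c) = v c / (\<Sum>c'\<in>K. v c')"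
    using gibbs_term(2)[OF v V] unfolding gap_def V_def by simp
qed

lemma log_simplices_bound:
  fixes v \<psi> :: "'i \<times> 'c \<Rightarrow> real"
  assumes I: "finite I" and K: "\<And>i. i \<in> I \<Longrightarrow> finite (K i)" and v: "\<And>e. e \<in> Sigma I K \<Longrightarrow> v e > 0"
    and \<psi>: "\<And>i. i \<in> I \<Longrightarrow> (\<Sum>c\<in>K i. exp (\<psi> (i, c))) = 1"
  shows "(\<Sum>e\<in>Sigma I K. v e * \<psi> e) \<le> (\<Sum>i\<in>I. \<Sum>c\<in>K i. v (i, c) * ln (v (i, c) / (\<Sum>c'\<in>K i. v (i, c'))))"
    and "(\<Sum>e\<in>Sigma I K. v e * \<psi> e) = (\<Sum>i\<in>I. \<Sum>c\<in>K i. v (i, c) * ln (v (i, c) / (\<Sum>c'\<in>K i. v (i, c'))))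
      \<Longrightarrow> \<forall>(i, c)\<in>Sigma I K. exp (\<psi> (i, c)) = v (i, c) / (\<Sum>c'\<in>K i. v (i, c'))"
proof -
  define S where "S i = (\<Sum>c\<in>K i. v (i, c) * \<psi> (i, c))" for i
  define M where "M i = (\<Sum>c\<in>K i. v (i, c) * ln (v (i, c) / (\<Sum>c'\<in>K i. v (i, c'))))" for i
  have L: "(\<Sum>e\<in>Sigma I K. v e * \<psi> e) = (\<Sum>i\<in>I. S i)"
    unfolding S_def using sum.Sigma[OF I, of K "\<lambda>i c. v (i, c) * \<psi> (i, c)"] K by simp
  have v_i: "\<And>c. c \<in> K i \<Longrightarrow> v (i, c) > 0" if "i \<in> I" for i
    using v that by blast
  have S_le: "S i \<le> M i" if "i \<in> I" for i
    using gibbs_inequality(1)[OF K[OF that] v_i[OF that] \<psi>[OF that]] unfolding S_def M_def .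
  then show "(\<Sum>e\<in>Sigma I K. v e * \<psi> e) \<le> (\<Sum>i\<in>I. \<Sum>c\<in>K i. v (i, c) * ln (v (i, c) / (\<Sum>c'\<in>K i. v (i, c'))))"
    unfolding L M_def[symmetric] by (rule sum_mono)
  assume "(\<Sum>e\<in>Sigma I K. v e * \<psi> e) = (\<Sum>i\<in>I. \<Sum>c\<in>K i. v (i, c) * ln (v (i, c) / (\<Sum>c'\<in>K i. v (i, c'))))"
  then have "(\<Sum>i\<in>I. M i - S i) = 0"
    unfolding L M_def[symmetric] by (simp add: sum_subtractf)
  then have "S i = M i" if "i \<in> I" for i
    using sum_nonneg_eq_0_iff[OF I, of "\<lambda>i. M i - S i"] S_le that by simp
  then have "\<forall>c\<in>K i. exp (\<psi> (i, c)) = v (i, c) / (\<Sum>c'\<in>K i. v (i, c'))" if "i \<in> I" for i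
    using gibbs_inequality(2)[of "K i" "\<lambda>c. v (i, c)" "\<lambda>c. \<psi> (i, c)", OF K[OF that] v_i[OF that] \<psi>[OF that]] that
    unfolding S_def M_def by blast
  then show "\<forall>(i, c)\<in>Sigma I K. exp (\<psi> (i, c)) = v (i, c) / (\<Sum>c'\<in>K i. v (i, c'))"
    by blast
qed

lemma log_simplex_argmax:
  fixes v :: "'i \<times> 'c \<Rightarrow> real"
  assumes I: "finite I" and K: "\<And>i. i \<in> I \<Longrightarrow> finite (K i)" "\<And>i. i \<in> I \<Longrightarrow> K i \<noteq> {}"
    and v: "\<And>e. e \<in> Sigma I K \<Longrightarrow> v e > 0"
  defines "feasible \<psi> \<equiv> \<forall>i\<in>I. (\<Sum>c\<in>K i. exp (\<psi> (i, c))) = 1"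
    and "L \<psi> \<equiv> \<Sum>e\<in>Sigma I K. v e * \<psi> e"
    and "optimal \<psi> \<equiv> \<forall>(i, c)\<in>Sigma I K. exp (\<psi> (i, c)) = v (i, c) / (\<Sum>c'\<in>K i. v (i, c'))"
  shows "\<exists>\<psi>. optimal \<psi>"
    and "feasible \<psi> \<and> (\<forall>\<psi>'. feasible \<psi>' \<longrightarrow> L \<psi>' \<le> L \<psi>) \<longleftrightarrow> optimal \<psi>"
proof -
  define B where "B = (\<Sum>i\<in>I. \<Sum>c\<in>K i. v (i, c) * ln (v (i, c) / (\<Sum>c'\<in>K i. v (i, c'))))"
  have bound: "L \<psi> \<le> B" if "feasible \<psi>" for \<psi>
    unfolding L_def B_def by (rule log_simplices_bound(1)) (use I K v that in \<open>auto simp: feasible_def\<close>)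
  have pos: "(\<Sum>c'\<in>K i. v (i, c')) > 0" if "i \<in> I" for i
    using K[OF that] v that by (intro sum_pos) auto
  have optimal_value: "feasible \<psi> \<and> L \<psi> = B" if opt: "optimal \<psi>" for \<psi>
  proof -
    have exp_\<psi>: "exp (\<psi> (i, c)) = v (i, c) / (\<Sum>c'\<in>K i. v (i, c'))" if "i \<in> I" "c \<in> K i" for i c
      using opt that unfolding optimal_def by blast
    have "(\<Sum>c\<in>K i. exp (\<psi> (i, c))) = 1" if "i \<in> I" for i
      using pos[OF that] exp_\<psi>[OF that] by (simp add: sum_divide_distrib[symmetric])
    moreover have "(\<Sum>c\<in>K i. v (i, c) * \<psi> (i, c)) = (\<Sum>c\<in>K i. v (i, c) * ln (v (i, c) / (\<Sum>c'\<in>K i. v (i, c'))))"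
      if "i \<in> I" for i
      using exp_\<psi>[OF that] by (metis (no_types, lifting) ln_exp sum.cong)
    ultimately show ?thesis
      unfolding feasible_def L_def B_def using sum.Sigma[OF I, of K "\<lambda>i c. v (i, c) * \<psi> (i, c)"] K(1)
      by simp
  qed
  show "\<exists>\<psi>. optimal \<psi>"
  proof
    show "optimal (\<lambda>(i, c). ln (v (i, c) / (\<Sum>c'\<in>K i. v (i, c'))))"
      unfolding optimal_def using v pos by auto
  qed
  then obtain \<psi>\<^sub>0 where "optimal \<psi>\<^sub>0" ..
  show "feasible \<psi> \<and> (\<forall>\<psi>'. feasible \<psi>' \<longrightarrow> L \<psi>' \<le> L \<psi>) \<longleftrightarrow> optimal \<psi>"
  proof
    assume max: "feasible \<psi> \<and> (\<forall>\<psi>'. feasible \<psi>' \<longrightarrow> L \<psi>' \<le> L \<psi>)"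
    have "B \<le> L \<psi>"
      using max optimal_value[OF \<open>optimal \<psi>\<^sub>0\<close>] by metis
    then have "L \<psi> = B"
      using bound max by force
    show "optimal \<psi>"
      unfolding optimal_def
      by (rule log_simplices_bound(2)) (use I K v max \<open>L \<psi> = B\<close> in \<open>auto simp: feasible_def L_def B_def\<close>)
  next
    assume "optimal \<psi>"
    then show "feasible \<psi> \<and> (\<forall>\<psi>'. feasible \<psi>' \<longrightarrow> L \<psi>' \<le> L \<psi>)"
      using optimal_value bound by simp
  qed
qed

context smooth_decomposable_pc
begin

lemma objective_argmax:
  assumes norm: "normalized C \<phi>" and D: "D \<noteq> {#}" "\<forall>x\<in>#D. x \<in> PiE Vars Dom"
    and pos: "\<forall>x\<in>#D. pc_prob C \<phi> x > 0" and \<gamma>: "\<gamma> > 1"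
  defines "v e \<equiv> TD C \<phi> (fst e) * exp (\<phi> e) + 1 / (\<gamma> - 1) * flow C D \<phi> e"
  shows "\<exists>\<phi>'. \<forall>(n, c)\<in>sum_edges C. exp (\<phi>' (n, c)) = v (n, c) / (\<Sum>c'\<in>ch C n. v (n, c'))"
    and "normalized C \<phi>' \<and>
      (\<forall>\<psi>. normalized C \<psi> \<longrightarrow> objective Vars Dom C D \<gamma> \<phi> \<psi> \<le> objective Vars Dom C D \<gamma> \<phi> \<phi>')
      \<longleftrightarrow> (\<forall>(n, c)\<in>sum_edges C. exp (\<phi>' (n, c)) = v (n, c) / (\<Sum>c'\<in>ch C n. v (n, c')))"
proof -
  let ?S = "{n \<in> nodes C. kind C n = SumN}"
  have E: "sum_edges C = Sigma ?S (ch C)"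
    by (auto simp: sum_edges_def)
  have normalized_iff: "normalized C \<psi> \<longleftrightarrow> (\<forall>n\<in>?S. (\<Sum>c\<in>ch C n. exp (\<psi> (n, c))) = 1)" for \<psi>
    by (auto simp: normalized_def)
  have "finite ?S" "\<And>n. n \<in> ?S \<Longrightarrow> finite (ch C n)"
    using finite_nodes finite_children by auto
  moreover have "ch C n \<noteq> {}" if "n \<in> ?S" for n
    using that input_iff_no_children[of n] by auto
  moreover have "v e > 0" if "e \<in> Sigma ?S (ch C)" for e
    using that TD_pos flow_nonneg[OF norm pos D(2)] \<gamma>
    unfolding v_def E[symmetric] by (auto intro!: add_pos_nonneg simp: sum_edges_def)
  ultimately have argmax_exists: "\<exists>\<psi>. \<forall>(n, c)\<in>Sigma ?S (ch C). exp (\<psi> (n, c)) = v (n, c) / (\<Sum>c'\<in>ch C n. v (n, c'))"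
    and argmax_iff: "\<And>\<psi>. (\<forall>n\<in>?S. (\<Sum>c\<in>ch C n. exp (\<psi> (n, c))) = 1) \<and>
      (\<forall>\<psi>'. (\<forall>n\<in>?S. (\<Sum>c\<in>ch C n. exp (\<psi>' (n, c))) = 1) \<longrightarrow>
        (\<Sum>e\<in>Sigma ?S (ch C). v e * \<psi>' e) \<le> (\<Sum>e\<in>Sigma ?S (ch C). v e * \<psi> e))
      \<longleftrightarrow> (\<forall>(n, c)\<in>Sigma ?S (ch C). exp (\<psi> (n, c)) = v (n, c) / (\<Sum>c'\<in>ch C n. v (n, c')))"
    using log_simplex_argmax[of ?S "ch C" v] by blast+
  show "\<exists>\<phi>'. \<forall>(n, c)\<in>sum_edges C. exp (\<phi>' (n, c)) = v (n, c) / (\<Sum>c'\<in>ch C n. v (n, c'))"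
    using argmax_exists unfolding E .
  have "objective Vars Dom C D \<gamma> \<phi> \<psi>' \<le> objective Vars Dom C D \<gamma> \<phi> \<psi> \<longleftrightarrow>
      (\<Sum>e\<in>Sigma ?S (ch C). v e * \<psi>' e) \<le> (\<Sum>e\<in>Sigma ?S (ch C). v e * \<psi> e)"
    if "normalized C \<psi>" "normalized C \<psi>'" for \<psi> \<psi>'
    using objective_le_iff[OF norm D(1) pos \<gamma> that] unfolding v_def E .
  then show "normalized C \<phi>' \<and>
      (\<forall>\<psi>. normalized C \<psi> \<longrightarrow> objective Vars Dom C D \<gamma> \<phi> \<psi> \<le> objective Vars Dom C D \<gamma> \<phi> \<phi>')
      \<longleftrightarrow> (\<forall>(n, c)\<in>sum_edges C. exp (\<phi>' (n, c)) = v (n, c) / (\<Sum>c'\<in>ch C n. v (n, c')))"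
    using argmax_iff[of \<phi>'] unfolding normalized_iff E by blast
qed

end

theorem mainTheorem5:
  fixes C :: "('n, 'v, 'd) pc" and Vars :: "'v set" and Dom :: "'v \<Rightarrow> 'd set"
    and D :: "('v \<Rightarrow> 'd) multiset" and \<phi> :: "'n \<times> 'n \<Rightarrow> real" and \<gamma> :: real
  assumes "wf_pc Vars Dom C" and "smooth C" and "decomposable C"
    and "normalized C \<phi>"
    and "D \<noteq> {#}" and "\<forall>x\<in>#D. x \<in> PiE Vars Dom"
    and "\<forall>x\<in>#D. pc_prob C \<phi> x > 0"
    and "\<gamma> > 1"
  shows "let \<alpha> = 1 / (\<gamma> - 1);
             ismax = (\<lambda>\<phi>'. normalized C \<phi>' \<and>
               (\<forall>\<psi>. normalized C \<psi> \<longrightarrow> objective Vars Dom C D \<gamma> \<phi> \<psi> \<le> objective Vars Dom C D \<gamma> \<phi> \<phi>'))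
         in (\<exists>\<phi>'. ismax \<phi>') \<and>
            (\<forall>\<phi>'. ismax \<phi>' \<longleftrightarrow>
               (\<forall>(n, c)\<in>sum_edges C. exp (\<phi>' (n, c)) =
                  (TD C \<phi> n * exp (\<phi> (n, c)) + \<alpha> * flow C D \<phi> (n, c)) /
                  (\<Sum>c'\<in>ch C n. TD C \<phi> n * exp (\<phi> (n, c')) + \<alpha> * flow C D \<phi> (n, c'))))"
proof -
  interpret smooth_decomposable_pc Vars Dom C
    using assms(1-3) by unfold_locales
  show ?thesis
    using objective_argmax[OF assms(4-8)] unfolding Let_def by simp
qed

end
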